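(* Let $\Gamma$ be a finitely presented group acting by algebraic automorphisms on a reduced irreducible complex affine algebraic variety $M$. Then at least one of the following holds: (1) there exists a nonconstant $\Gamma$-invariant meromorphic (rational) function on $M$; or (2) there exists a point $x\in M$ such that the orbit $\Gamma x$ is Zariski dense in $M$. *)

theory Defs
  imports Complex_Main "HOL-Algebra.Group" "HOL-Algebra.Generated_Groups"
begin

inductive_set poly_funs :: "(('n::finite \<Rightarrow> complex) \<Rightarrow> complex) set" where
  pf_const: "(\<lambda>x. c) \<in> poly_funs"
| pf_var: "(\<lambda>x. x i) \<in> poly_funs"
| pf_add: "f \<in> poly_funs \<Longrightarrow> g \<in> poly_funs \<Longrightarrow> (\<lambda>x. f x + g x) \<in> poly_funs"
| pf_mult: "f \<in> poly_funs \<Longrightarrow> g \<in> poly_funs \<Longrightarrow> (\<lambda>x. f x * g x) \<in> poly_funs"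

definition zariski_closed :: "('n::finite \<Rightarrow> complex) set \<Rightarrow> bool" where
  "zariski_closed A \<longleftrightarrow> (\<exists>F. F \<subseteq> poly_funs \<and> A = {x. \<forall>f\<in>F. f x = 0})"

definition irreducible_affine_variety :: "('n::finite \<Rightarrow> complex) set \<Rightarrow> bool" where
  "irreducible_affine_variety M \<longleftrightarrow> zariski_closed M \<and> M \<noteq> {} \<and>
     (\<forall>A B. zariski_closed A \<and> zariski_closed B \<and> M \<subseteq> A \<union> B \<longrightarrow> M \<subseteq> A \<or> M \<subseteq> B)"

definition regular_map ::
  "('n::finite \<Rightarrow> complex) set \<Rightarrow> ('n \<Rightarrow> complex) set \<Rightarrow> (('n \<Rightarrow> complex) \<Rightarrow> ('n \<Rightarrow> complex)) \<Rightarrow> bool" where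
  "regular_map M N \<phi> \<longleftrightarrow> (\<forall>x\<in>M. \<phi> x \<in> N) \<and>
     (\<exists>p. (\<forall>i. p i \<in> poly_funs) \<and> (\<forall>x\<in>M. \<forall>i. \<phi> x i = p i x))"

definition algebraic_automorphism ::
  "('n::finite \<Rightarrow> complex) set \<Rightarrow> (('n \<Rightarrow> complex) \<Rightarrow> ('n \<Rightarrow> complex)) \<Rightarrow> bool" where
  "algebraic_automorphism M \<phi> \<longleftrightarrow> regular_map M M \<phi> \<and>
     (\<exists>\<psi>. regular_map M M \<psi> \<and> (\<forall>x\<in>M. \<psi> (\<phi> x) = x \<and> \<phi> (\<psi> x) = x))"

definition zariski_dense_in :: "('n::finite \<Rightarrow> complex) set \<Rightarrow> ('n \<Rightarrow> complex) set \<Rightarrow> bool" where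
  "zariski_dense_in S M \<longleftrightarrow> S \<subseteq> M \<and> (\<forall>A. zariski_closed A \<and> S \<subseteq> A \<longrightarrow> M \<subseteq> A)"

text \<open>Rational functions on M: quotients f/g of polynomial functions with g not identically
  zero on M; f1/g1 = f2/g2 iff f1 g2 = f2 g1 on M (M irreducible, so this is the function field).\<close>
definition rational_fun_rep :: "('n::finite \<Rightarrow> complex) set \<Rightarrow> (('n \<Rightarrow> complex) \<Rightarrow> complex) \<Rightarrow> (('n \<Rightarrow> complex) \<Rightarrow> complex) \<Rightarrow> bool" where
  "rational_fun_rep M f g \<longleftrightarrow> f \<in> poly_funs \<and> g \<in> poly_funs \<and> (\<exists>x\<in>M. g x \<noteq> 0)"

definition rat_eq :: "('n::finite \<Rightarrow> complex) set \<Rightarrow> (('n \<Rightarrow> complex) \<Rightarrow> complex) \<Rightarrow> (('n \<Rightarrow> complex) \<Rightarrow> complex)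
     \<Rightarrow> (('n \<Rightarrow> complex) \<Rightarrow> complex) \<Rightarrow> (('n \<Rightarrow> complex) \<Rightarrow> complex) \<Rightarrow> bool" where
  "rat_eq M f1 g1 f2 g2 \<longleftrightarrow> (\<forall>x\<in>M. f1 x * g2 x = f2 x * g1 x)"

text \<open>Words over generators: letters (b, s), b = True meaning s, b = False meaning s^-1.\<close>

fun eval_word :: "('g, 'z) monoid_scheme \<Rightarrow> (bool \<times> 'g) list \<Rightarrow> 'g" where
  "eval_word G [] = \<one>\<^bsub>G\<^esub>"
| "eval_word G ((b, s) # w) = (if b then s else inv\<^bsub>G\<^esub> s) \<otimes>\<^bsub>G\<^esub> eval_word G w"

definition word_inv :: "(bool \<times> 'g) list \<Rightarrow> (bool \<times> 'g) list" where
  "word_inv w = rev (map (\<lambda>(b, s). (\<not> b, s)) w)"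

text \<open>Words over S representing elements of the normal closure of R in the free group on S.\<close>
inductive_set rel_consequences :: "'g set \<Rightarrow> (bool \<times> 'g) list set \<Rightarrow> (bool \<times> 'g) list set"
  for S R where
  rc_nil: "[] \<in> rel_consequences S R"
| rc_rel: "r \<in> R \<Longrightarrow> r \<in> rel_consequences S R"
| rc_app: "u \<in> rel_consequences S R \<Longrightarrow> v \<in> rel_consequences S R \<Longrightarrow> u @ v \<in> rel_consequences S R"
| rc_inv: "w \<in> rel_consequences S R \<Longrightarrow> word_inv w \<in> rel_consequences S R"
| rc_conj: "w \<in> rel_consequences S R \<Longrightarrow> set x \<subseteq> UNIV \<times> S \<Longrightarrow>
            x @ w @ word_inv x \<in> rel_consequences S R"
| rc_ins: "u @ v \<in> rel_consequences S R \<Longrightarrow> s \<in> S \<Longrightarrow>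
            u @ [(b, s), (\<not> b, s)] @ v \<in> rel_consequences S R"
| rc_del: "u @ [(b, s), (\<not> b, s)] @ v \<in> rel_consequences S R \<Longrightarrow> u @ v \<in> rel_consequences S R"

definition finitely_presented :: "('g, 'z) monoid_scheme \<Rightarrow> bool" where
  "finitely_presented G \<longleftrightarrow> group G \<and>
     (\<exists>S R. finite S \<and> S \<subseteq> carrier G \<and> generate G S = carrier G \<and> finite R \<and>
        (\<forall>r\<in>R. set r \<subseteq> UNIV \<times> S \<and> eval_word G r = \<one>\<^bsub>G\<^esub>) \<and>
        (\<forall>w. set w \<subseteq> UNIV \<times> S \<and> eval_word G w = \<one>\<^bsub>G\<^esub> \<longrightarrow> w \<in> rel_consequences S R))"

definition algebraic_action ::
  "('g, 'z) monoid_scheme \<Rightarrow> ('n::finite \<Rightarrow> complex) set \<Rightarrow> ('g \<Rightarrow> ('n \<Rightarrow> complex) \<Rightarrow> ('n \<Rightarrow> complex)) \<Rightarrow> bool" where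
  "algebraic_action G M \<phi> \<longleftrightarrow>
     (\<forall>g\<in>carrier G. algebraic_automorphism M (\<phi> g)) \<and>
     (\<forall>x\<in>M. \<phi> \<one>\<^bsub>G\<^esub> x = x) \<and>
     (\<forall>g\<in>carrier G. \<forall>h\<in>carrier G. \<forall>x\<in>M. \<phi> (g \<otimes>\<^bsub>G\<^esub> h) x = \<phi> g (\<phi> h x))"

definition orbit_of :: "('g, 'z) monoid_scheme \<Rightarrow> ('g \<Rightarrow> 'p \<Rightarrow> 'p) \<Rightarrow> 'p \<Rightarrow> 'p set" where
  "orbit_of G \<phi> x = (\<lambda>g. \<phi> g x) ` carrier G"

end

theory Submission
  imports Defs "Jordan_Normal_Form.Determinant" "HOL-Analysis.Continuum_Not_Denumerable"
    "HOL-Computational_Algebra.Fundamental_Theorem_Algebra"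
begin

(* Let V_d be the span of the monomials x^\<alpha> with all exponents \<alpha>_i \<le> d. For X \<subseteq> M, the
   size of the largest nonsingular minor of the evaluation matrix (y^\<alpha>), with \<alpha> as above
   and y \<in> X, is the dimension of the restriction of V_d to X.

   If for some d every orbit has smaller rank than M, pick an orbit of maximal rank r and an
   r \<times> r nonsingular minor at orbit points g_1 x_0, ..., g_r x_0. Wherever the same minor
   at g_1 x, ..., g_r x is nonsingular, Cramer's rule expresses every monomial on the orbit of x
   through the r monomials of the minor, with coefficients that are rational functions of x.
   They only depend on the orbit of x, hence are invariant, and are not all constant:
   otherwise V_d would have dimension at most r on all of M.

   Otherwise, for every d the points whose orbit has full rank contain a nonempty Zariski
   open subset of M. As \<complex> is uncountable, these countably many open sets of the
   irreducible M have a common point x (a countable form of the Nullstellensatz). An element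
   of V_d vanishing on the orbit of x then vanishes on all of M, and every polynomial lies in
   some V_d. *)

section \<open>Polynomial functions\<close>

lemma poly_funs_sum:
  "(\<And>a. a \<in> A \<Longrightarrow> f a \<in> poly_funs) \<Longrightarrow> (\<lambda>x. \<Sum>a\<in>A. f a x) \<in> poly_funs"
proof (induction A rule: infinite_finite_induct)
  case (insert a A)
  then have "(\<lambda>x. f a x + (\<Sum>a\<in>A. f a x)) \<in> poly_funs"
    by (intro pf_add) (auto simp: eta_contract_eq)
  with insert show ?case by simp
qed (simp_all add: pf_const)

lemma poly_funs_prod:
  "(\<And>a. a \<in> A \<Longrightarrow> f a \<in> poly_funs) \<Longrightarrow> (\<lambda>x. \<Prod>a\<in>A. f a x) \<in> poly_funs"
proof (induction A rule: infinite_finite_induct)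
  case (insert a A)
  then have "(\<lambda>x. f a x * (\<Prod>a\<in>A. f a x)) \<in> poly_funs"
    by (intro pf_mult) (auto simp: eta_contract_eq)
  with insert show ?case by simp
qed (simp_all add: pf_const)

lemma poly_funs_const_mult: "f \<in> poly_funs \<Longrightarrow> (\<lambda>x. c * f x) \<in> poly_funs"
  using pf_mult[OF pf_const] .

lemma poly_funs_diff: "f \<in> poly_funs \<Longrightarrow> g \<in> poly_funs \<Longrightarrow> (\<lambda>x. f x - g x) \<in> poly_funs"
  using pf_add[of f "\<lambda>x. (-1) * g x"] poly_funs_const_mult[of g "-1"] by simp

lemma poly_funs_power: "f \<in> poly_funs \<Longrightarrow> (\<lambda>x. f x ^ k) \<in> poly_funs"
  by (induction k) (simp_all add: pf_const pf_mult)

lemma poly_funs_comp: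
  "f \<in> poly_funs \<Longrightarrow> (\<And>i. p i \<in> poly_funs) \<Longrightarrow> (\<lambda>x. f (\<lambda>i. p i x)) \<in> poly_funs"
  by (induction rule: poly_funs.induct) (auto simp: eta_contract_eq intro: poly_funs.intros)

lemma poly_funs_univariate: "(\<lambda>x. poly g (x i)) \<in> poly_funs"
  by (induction g) (simp_all add: pf_const pf_add pf_mult pf_var)

lemma poly_funs_det:
  assumes "\<And>x. A x \<in> carrier_mat n n"
    and "\<And>i j. i < n \<Longrightarrow> j < n \<Longrightarrow> (\<lambda>x. A x $$ (i, j)) \<in> poly_funs"
  shows "(\<lambda>x. det (A x)) \<in> poly_funs"
proof -
  have "(\<lambda>x. \<Sum>p\<in>{p. p permutes {0..<n}}. signof p * (\<Prod>i = 0..<n. A x $$ (i, p i))) \<in> poly_funs"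
    using assms(2) permutes_in_image
    by (intro poly_funs_sum poly_funs_const_mult poly_funs_prod) fastforce
  then show ?thesis
    using det_def'[OF assms(1)] by simp
qed

lemma poly_funs_adj_mat:
  assumes A: "\<And>x. A x \<in> carrier_mat n n"
    and entries: "\<And>i j. i < n \<Longrightarrow> j < n \<Longrightarrow> (\<lambda>x. A x $$ (i, j)) \<in> poly_funs"
    and ij: "i < n" "j < n"
  shows "(\<lambda>x. adj_mat (A x) $$ (i, j)) \<in> poly_funs"
proof -
  have "(\<lambda>x. det (mat_delete (A x) j i)) \<in> poly_funs"
  proof (rule poly_funs_det)
    fix a b assume "a < n - 1" "b < n - 1"
    then show "(\<lambda>x. mat_delete (A x) j i $$ (a, b)) \<in> poly_funs"
      using entries carrier_matD[OF A] by (simp add: mat_delete_def)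
  qed (use mat_delete_carrier[OF A] in auto)
  then have "(\<lambda>x. (-1) ^ (j + i) * det (mat_delete (A x) j i)) \<in> poly_funs"
    by (rule poly_funs_const_mult)
  then show ?thesis
    using carrier_matD[OF A] ij by (simp add: adj_mat_def cofactor_def)
qed

definition monomial :: "('n::finite \<Rightarrow> nat) \<Rightarrow> ('n \<Rightarrow> complex) \<Rightarrow> complex" where
  "monomial \<alpha> x = (\<Prod>i\<in>UNIV. x i ^ \<alpha> i)"

definition bounded_exponents :: "nat \<Rightarrow> ('n::finite \<Rightarrow> nat) set" where
  "bounded_exponents d = {\<alpha>. \<forall>i. \<alpha> i \<le> d}"

lemma poly_funs_monomial: "monomial \<alpha> \<in> poly_funs"
  using poly_funs_prod[OF poly_funs_power[OF pf_var]] by (simp add: monomial_def[abs_def])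

lemma monomial_add: "monomial (\<lambda>i. \<alpha> i + \<beta> i) x = monomial \<alpha> x * monomial \<beta> x"
  by (simp add: monomial_def power_add prod.distrib)

lemma finite_bounded_exponents: "finite (bounded_exponents d)"
proof (rule finite_subset)
  show "bounded_exponents d \<subseteq> PiE UNIV (\<lambda>_. {..d})"
    by (auto simp: bounded_exponents_def PiE_def extensional_def)
qed (simp add: finite_PiE)

lemma poly_funs_finite_monomial_expansion:
  "f \<in> poly_funs \<Longrightarrow> \<exists>A c. finite A \<and> f = (\<lambda>x. \<Sum>\<alpha>\<in>A. c \<alpha> * monomial \<alpha> x)"
proof (induction rule: poly_funs.induct)
  case (pf_const c)
  show ?case
    by (intro exI[of _ "{\<lambda>_. 0}"] exI[of _ "\<lambda>_. c"]) (simp add: monomial_def)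
next
  case (pf_var i)
  have "monomial (\<lambda>j. if j = i then 1 else 0) x = x i" for x :: "'a \<Rightarrow> complex"
    unfolding monomial_def by (simp add: if_distrib prod.delta cong: if_cong)
  then show ?case
    by (intro exI[of _ "{\<lambda>j. if j = i then 1 else 0}"] exI[of _ "\<lambda>_. 1"]) auto
next
  case (pf_add f g)
  then obtain A a B b where A: "finite A" "f = (\<lambda>x. \<Sum>\<alpha>\<in>A. a \<alpha> * monomial \<alpha> x)"
    and B: "finite B" "g = (\<lambda>x. \<Sum>\<alpha>\<in>B. b \<alpha> * monomial \<alpha> x)" by blast
  define c where "c \<alpha> = (if \<alpha> \<in> A then a \<alpha> else 0) + (if \<alpha> \<in> B then b \<alpha> else 0)" for \<alpha>
  have "(\<Sum>\<alpha>\<in>A. a \<alpha> * monomial \<alpha> x) = (\<Sum>\<alpha>\<in>A \<union> B. (if \<alpha> \<in> A then a \<alpha> else 0) * monomial \<alpha> x)"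
    and "(\<Sum>\<alpha>\<in>B. b \<alpha> * monomial \<alpha> x) = (\<Sum>\<alpha>\<in>A \<union> B. (if \<alpha> \<in> B then b \<alpha> else 0) * monomial \<alpha> x)"
    for x by (rule sum.mono_neutral_cong_left; use A B in auto)+
  then have "f x + g x = (\<Sum>\<alpha>\<in>A \<union> B. c \<alpha> * monomial \<alpha> x)" for x
    unfolding A(2) B(2) c_def by (simp add: sum.distrib distrib_right)
  then show ?case
    using A B by (intro exI[of _ "A \<union> B"] exI[of _ c]) auto
next
  case (pf_mult f g)
  then obtain A a B b where A: "finite A" "f = (\<lambda>x. \<Sum>\<alpha>\<in>A. a \<alpha> * monomial \<alpha> x)"
    and B: "finite B" "g = (\<lambda>x. \<Sum>\<alpha>\<in>B. b \<alpha> * monomial \<alpha> x)" by blast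
  define h where "h p = (\<lambda>i. fst p i + snd p i)" for p :: "('a \<Rightarrow> nat) \<times> ('a \<Rightarrow> nat)"
  define c where "c \<gamma> = (\<Sum>p\<in>{p \<in> A \<times> B. h p = \<gamma>}. a (fst p) * b (snd p))" for \<gamma>
  have "f x * g x = (\<Sum>p\<in>A \<times> B. a (fst p) * b (snd p) * monomial (h p) x)" for x
    unfolding A(2) B(2) sum_product sum.cartesian_product h_def
    by (rule sum.cong) (auto simp: monomial_add)
  also have "\<dots> x = (\<Sum>\<gamma>\<in>h ` (A \<times> B). c \<gamma> * monomial \<gamma> x)" for x
    unfolding c_def sum_distrib_right using A B
    by (subst sum.image_gen[of "A \<times> B" _ h]) (auto intro!: sum.cong)
  finally show ?case
    using A B by (intro exI[of _ "h ` (A \<times> B)"] exI[of _ c]) auto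
qed

lemma poly_funs_monomial_expansion:
  assumes "f \<in> poly_funs"
  shows "\<exists>d c. \<forall>x. f x = (\<Sum>\<alpha>\<in>bounded_exponents d. c \<alpha> * monomial \<alpha> x)"
proof -
  obtain A a where A: "finite A" "f = (\<lambda>x. \<Sum>\<alpha>\<in>A. a \<alpha> * monomial \<alpha> x)"
    using poly_funs_finite_monomial_expansion[OF assms] by blast
  define d where "d = Max ((\<lambda>(\<alpha>, i). \<alpha> i) ` (A \<times> UNIV))"
  have "A \<subseteq> bounded_exponents d"
    unfolding bounded_exponents_def d_def using A(1) by (auto intro!: Max_ge)
  then have "f x = (\<Sum>\<alpha>\<in>bounded_exponents d. (if \<alpha> \<in> A then a \<alpha> else 0) * monomial \<alpha> x)" for x
    unfolding A(2) by (intro sum.mono_neutral_cong_left finite_bounded_exponents) auto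
  then show ?thesis
    by (intro exI allI)
qed

section \<open>Regular functions on an affine variety\<close>

definition regular_on :: "('n::finite \<Rightarrow> complex) set \<Rightarrow> (('n \<Rightarrow> complex) \<Rightarrow> complex) \<Rightarrow> bool" where
  "regular_on M f \<longleftrightarrow> (\<exists>p\<in>poly_funs. \<forall>x\<in>M. f x = p x)"

lemma regular_on_poly_funs: "f \<in> poly_funs \<Longrightarrow> regular_on M f"
  unfolding regular_on_def by blast

lemma regular_on_const: "regular_on M (\<lambda>x. c)"
  by (rule regular_on_poly_funs[OF pf_const])

lemma regular_on_mult: "regular_on M f \<Longrightarrow> regular_on M g \<Longrightarrow> regular_on M (\<lambda>x. f x * g x)"
  unfolding regular_on_def by (metis (no_types, lifting) pf_mult)

lemma regular_on_diff: "regular_on M f \<Longrightarrow> regular_on M g \<Longrightarrow> regular_on M (\<lambda>x. f x - g x)"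
  unfolding regular_on_def by (metis (no_types, lifting) poly_funs_diff)

lemma regular_on_sum:
  assumes "\<And>a. a \<in> A \<Longrightarrow> regular_on M (f a)"
  shows "regular_on M (\<lambda>x. \<Sum>a\<in>A. f a x)"
proof -
  obtain p where "\<And>a. a \<in> A \<Longrightarrow> p a \<in> poly_funs \<and> (\<forall>x\<in>M. f a x = p a x)"
    using assms unfolding regular_on_def by metis
  then show ?thesis
    unfolding regular_on_def by (intro bexI[OF _ poly_funs_sum[of A p]]) auto
qed

lemma regular_on_comp:
  assumes f: "regular_on N f" and \<psi>: "regular_map M N \<psi>"
  shows "regular_on M (\<lambda>x. f (\<psi> x))"
proof -
  obtain p where p: "p \<in> poly_funs" "\<And>y. y \<in> N \<Longrightarrow> f y = p y"
    using f unfolding regular_on_def by blast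
  obtain q where q: "\<And>i. q i \<in> poly_funs" "\<And>x. x \<in> M \<Longrightarrow> \<psi> x = (\<lambda>i. q i x)"
    using \<psi> unfolding regular_map_def by fastforce
  have "\<psi> x \<in> N" if "x \<in> M" for x
    using \<psi> that unfolding regular_map_def by blast
  then show ?thesis
    unfolding regular_on_def using p q by (intro bexI[OF _ poly_funs_comp[OF p(1) q(1)]]) auto
qed

lemma regular_on_matrix:
  assumes "\<And>x. A x \<in> carrier_mat n n"
    and "\<And>i j. i < n \<Longrightarrow> j < n \<Longrightarrow> regular_on M (\<lambda>x. A x $$ (i, j))"
  obtains B where "\<And>x. B x \<in> carrier_mat n n"
    and "\<And>i j. i < n \<Longrightarrow> j < n \<Longrightarrow> (\<lambda>x. B x $$ (i, j)) \<in> poly_funs"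
    and "\<And>x. x \<in> M \<Longrightarrow> A x = B x"
proof -
  obtain p where p: "\<And>i j. i < n \<Longrightarrow> j < n \<Longrightarrow> p i j \<in> poly_funs \<and> (\<forall>x\<in>M. A x $$ (i, j) = p i j x)"
    using assms(2) unfolding regular_on_def by metis
  show ?thesis
  proof (rule that[of "\<lambda>x. mat n n (\<lambda>(i, j). p i j x)"])
    show "A x = mat n n (\<lambda>(i, j). p i j x)" if "x \<in> M" for x
      using p assms(1)[of x] that by (intro eq_matI) auto
  qed (use p in \<open>auto simp: eta_contract_eq\<close>)
qed

lemma regular_on_det:
  assumes "\<And>x. A x \<in> carrier_mat n n"
    and "\<And>i j. i < n \<Longrightarrow> j < n \<Longrightarrow> regular_on M (\<lambda>x. A x $$ (i, j))"
  shows "regular_on M (\<lambda>x. det (A x))"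
proof -
  obtain B where "\<And>x. B x \<in> carrier_mat n n"
    and "\<And>i j. i < n \<Longrightarrow> j < n \<Longrightarrow> (\<lambda>x. B x $$ (i, j)) \<in> poly_funs"
    and "\<And>x. x \<in> M \<Longrightarrow> A x = B x"
    using regular_on_matrix[OF assms] by metis
  then show ?thesis
    unfolding regular_on_def by (intro bexI[OF _ poly_funs_det]) auto
qed

lemma regular_on_adj_mat:
  assumes "\<And>x. A x \<in> carrier_mat n n"
    and "\<And>i j. i < n \<Longrightarrow> j < n \<Longrightarrow> regular_on M (\<lambda>x. A x $$ (i, j))"
    and "i < n" "j < n"
  shows "regular_on M (\<lambda>x. adj_mat (A x) $$ (i, j))"
proof -
  obtain B where "\<And>x. B x \<in> carrier_mat n n"
    and "\<And>i j. i < n \<Longrightarrow> j < n \<Longrightarrow> (\<lambda>x. B x $$ (i, j)) \<in> poly_funs"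
    and "\<And>x. x \<in> M \<Longrightarrow> A x = B x"
    using regular_on_matrix[OF assms(1,2)] by metis
  then show ?thesis
    unfolding regular_on_def using assms(3,4)
    by (intro bexI[where x = "\<lambda>x. adj_mat (B x) $$ (i, j)"] poly_funs_adj_mat[where n = n]) auto
qed

lemma irreducible_vanishing_product:
  assumes M: "irreducible_affine_variety M" and "regular_on M a" "regular_on M b"
    and ab: "\<And>x. x \<in> M \<Longrightarrow> a x * b x = 0"
  shows "(\<forall>x\<in>M. a x = 0) \<or> (\<forall>x\<in>M. b x = 0)"
proof -
  obtain p q where pq: "p \<in> poly_funs" "q \<in> poly_funs" "\<forall>x\<in>M. a x = p x" "\<forall>x\<in>M. b x = q x"
    using assms(2,3) unfolding regular_on_def by blast
  have "zariski_closed {x. h x = 0}" if "h \<in> poly_funs" for h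
    unfolding zariski_closed_def using that by (intro exI[of _ "{h}"]) auto
  moreover have "M \<subseteq> {x. p x = 0} \<union> {x. q x = 0}"
    using ab pq by auto
  ultimately have "M \<subseteq> {x. p x = 0} \<or> M \<subseteq> {x. q x = 0}"
    using M pq unfolding irreducible_affine_variety_def by blast
  then show ?thesis
    using pq by auto
qed

corollary irreducible_vanishing_off_zeros:
  assumes "irreducible_affine_variety M" "regular_on M a" "regular_on M b"
    and "\<exists>x\<in>M. a x \<noteq> 0" and "\<And>x. x \<in> M \<Longrightarrow> a x \<noteq> 0 \<Longrightarrow> b x = 0"
  shows "\<forall>x\<in>M. b x = 0"
  using irreducible_vanishing_product[OF assms(1-3)] assms(4,5) by auto

section \<open>Nonsingular minors of evaluation matrices\<close>

lemma linear_dependence: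
  fixes v :: "'t \<Rightarrow> 'a \<Rightarrow> 'f::field"
  assumes "finite F" "finite T" "card F < card T"
  shows "\<exists>l. (\<exists>t\<in>T. l t \<noteq> 0) \<and> (\<forall>\<alpha>\<in>F. (\<Sum>t\<in>T. l t * v t \<alpha>) = 0)"
  using assms
proof (induction F arbitrary: T v rule: finite_induct)
  case empty
  then obtain t0 where "t0 \<in> T"
    by fastforce
  then show ?case
    by (intro exI[of _ "\<lambda>t. if t = t0 then 1 else 0"]) auto
next
  case (insert a F)
  show ?case
  proof (cases "\<exists>t0\<in>T. v t0 a \<noteq> 0")
    case False
    with insert.IH[of T v] insert.prems insert.hyps show ?thesis
      by auto
  next
    case True
    then obtain t0 where t0: "t0 \<in> T" "v t0 a \<noteq> 0" ..
    define T' where "T' = T - {t0}"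
    define w where "w t \<beta> = v t \<beta> - v t a / v t0 a * v t0 \<beta>" for t \<beta>
    \<comment> \<open>Gaussian elimination of the coordinate \<open>a\<close> using the pivot \<open>t0\<close>.\<close>
    have T: "finite T'" "T = insert t0 T'" "t0 \<notin> T'"
      using insert.prems t0 by (auto simp: T'_def)
    then obtain m where m: "\<exists>t\<in>T'. m t \<noteq> 0" "\<forall>\<beta>\<in>F. (\<Sum>t\<in>T'. m t * w t \<beta>) = 0"
      using insert.IH[of T' w] insert.prems insert.hyps by auto
    define l where "l t = (if t = t0 then - (\<Sum>s\<in>T'. m s * v s a) / v t0 a else m t)" for t
    have sum_l: "(\<Sum>t\<in>T. l t * v t \<beta>) = l t0 * v t0 \<beta> + (\<Sum>t\<in>T'. m t * v t \<beta>)" for \<beta>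
      using T by (auto simp: l_def intro!: sum.cong)
    have "(\<Sum>t\<in>T. l t * v t \<beta>) = (\<Sum>t\<in>T'. m t * w t \<beta>)" for \<beta>
      unfolding sum_l w_def using t0
      by (simp add: l_def algebra_simps sum_subtractf sum_distrib_left sum_divide_distrib flip: sum_distrib_right)
    moreover have "(\<Sum>t\<in>T. l t * v t a) = 0"
      unfolding sum_l using t0(2) by (simp add: l_def)
    ultimately have "\<forall>\<beta>\<in>insert a F. (\<Sum>t\<in>T. l t * v t \<beta>) = 0"
      using m(2) by auto
    moreover have "\<exists>t\<in>T. l t \<noteq> 0"
      using m(1) T by (auto simp: l_def)
    ultimately show ?thesis
      by blast
  qed
qed

definition eval_mat :: "('k \<Rightarrow> 'p \<Rightarrow> 'a) \<Rightarrow> 'k list \<Rightarrow> 'p list \<Rightarrow> 'a mat" where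
  "eval_mat E ks ys = mat (length ks) (length ys) (\<lambda>(i, j). E (ks ! i) (ys ! j))"

text \<open>\<open>minor_rank E K X\<close> is the dimension of the span of the restrictions of the \<open>E k\<close>,
  \<open>k \<in> K\<close>, to \<open>X\<close>. On the span, Cramer's rule for a nonsingular minor reads
  \<open>E k = (\<Sum>j. expansion_coeff E ks ys k j * E (ks ! j)) / det (eval_mat E ks ys)\<close>.\<close>

definition expansion_coeff :: "('k \<Rightarrow> 'p \<Rightarrow> 'a::comm_ring_1) \<Rightarrow> 'k list \<Rightarrow> 'p list \<Rightarrow> 'k \<Rightarrow> nat \<Rightarrow> 'a" where
  "expansion_coeff E ks ys k j = (\<Sum>i<length ys. E k (ys ! i) * adj_mat (eval_mat E ks ys) $$ (i, j))"

definition nonsingular_minor :: "('k \<Rightarrow> 'p \<Rightarrow> 'a::comm_ring_1) \<Rightarrow> 'k set \<Rightarrow> 'p set \<Rightarrow> 'k list \<Rightarrow> 'p list \<Rightarrow> bool" where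
  "nonsingular_minor E K X ks ys \<longleftrightarrow>
     set ks \<subseteq> K \<and> set ys \<subseteq> X \<and> length ys = length ks \<and> det (eval_mat E ks ys) \<noteq> 0"

definition minor_rank :: "('k \<Rightarrow> 'p \<Rightarrow> 'a::comm_ring_1) \<Rightarrow> 'k set \<Rightarrow> 'p set \<Rightarrow> nat" where
  "minor_rank E K X = Max {length ks | ks ys. nonsingular_minor E K X ks ys}"

lemma eval_mat_carrier: "length ys = length ks \<Longrightarrow> eval_mat E ks ys \<in> carrier_mat (length ks) (length ks)"
  by (simp add: eval_mat_def)

lemma det_bordered_eval_mat:
  fixes E :: "'k \<Rightarrow> 'p \<Rightarrow> 'a::field"
  assumes len: "length ys = length ks" and nonsingular: "det (eval_mat E ks ys) \<noteq> 0"
  shows "det (eval_mat E (ks @ [k]) (ys @ [y])) =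
    E k y * det (eval_mat E ks ys) - (\<Sum>j<length ks. expansion_coeff E ks ys k j * E (ks ! j) y)"
proof -
  define r where "r = length ks"
  define B where "B = eval_mat E ks ys"
  define U where "U = mat r 1 (\<lambda>(i, _). E (ks ! i) y)"
  define W where "W = mat 1 r (\<lambda>(_, j). E k (ys ! j))"
  define e where "e = mat 1 1 (\<lambda>_. E k y)"
  define V where "V = - (adj_mat B * U)"
  define D where "D = mat 1 1 (\<lambda>_. det B)"
  define T where "T = four_block_mat (1\<^sub>m r) V (0\<^sub>m 1 r) D"
  define X where "X = W * V + e * D"
  \<comment> \<open>Column operations with the adjugate: \<open>[B U; W e] * T = [B 0; W X]\<close>, a Schur complement.\<close>
  have B: "B \<in> carrier_mat r r" and adj: "adj_mat B \<in> carrier_mat r r" "B * adj_mat B = det B \<cdot>\<^sub>m 1\<^sub>m r"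
    unfolding B_def r_def using len eval_mat_carrier adj_mat by blast+
  have U: "U \<in> carrier_mat r 1" and W: "W \<in> carrier_mat 1 r" and e: "e \<in> carrier_mat 1 1"
    and D: "D \<in> carrier_mat 1 1" and V: "V \<in> carrier_mat r 1" and X: "X \<in> carrier_mat 1 1"
    using adj by (auto simp: U_def W_def e_def D_def V_def X_def)
  have bordered: "eval_mat E (ks @ [k]) (ys @ [y]) = four_block_mat B U W e"
    by (rule eq_matI) (use len in \<open>auto simp: eval_mat_def B_def U_def W_def e_def r_def nth_append\<close>)
  have "B * V + U * D = 0\<^sub>m r 1"
  proof -
    have "B * V = - (det B \<cdot>\<^sub>m U)"
      using B adj U
      by (simp add: V_def assoc_mult_mat[symmetric, of B r r "adj_mat B" r U 1]
          mult_smult_assoc_mat[of "1\<^sub>m r" r r U 1])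
    moreover have "U * D = det B \<cdot>\<^sub>m U"
      by (rule eq_matI) (auto simp: U_def D_def scalar_prod_def)
    ultimately show ?thesis
      using U by (intro eq_matI) auto
  qed
  then have "four_block_mat B U W e * T = four_block_mat B (0\<^sub>m r 1) W X"
    unfolding T_def X_def using B U W e V D
    by (subst mult_four_block_mat[OF B U W e]) auto
  moreover have "four_block_mat B U W e \<in> carrier_mat (r + 1) (r + 1)" "T \<in> carrier_mat (r + 1) (r + 1)"
    unfolding T_def using B e D by (auto intro: four_block_carrier_mat)
  ultimately have "det (four_block_mat B U W e) * det T = det B * det X"
    using det_mult det_four_block_mat_upper_right_zero[OF B refl W X] by metis
  moreover have "det T = det B"
    unfolding T_def using det_four_block_mat_lower_left_zero[OF one_carrier_mat V refl D]
    by (simp add: D_def det_single)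
  moreover have "det X = E k y * det B - (\<Sum>j<r. expansion_coeff E ks ys k j * E (ks ! j) y)"
  proof -
    have "(W * V) $$ (0, 0) = - (\<Sum>i<r. E k (ys ! i) * (\<Sum>j<r. adj_mat B $$ (i, j) * E (ks ! j) y))"
      using adj U W
      by (auto simp: V_def scalar_prod_def W_def U_def sum_negf atLeast0LessThan intro!: sum.cong)
    also have "\<dots> = - (\<Sum>j<r. expansion_coeff E ks ys k j * E (ks ! j) y)"
      unfolding expansion_coeff_def B_def len r_def sum_distrib_left sum_distrib_right
      by (subst sum.swap) (simp add: ac_simps)
    finally show ?thesis
      using W V e D det_single[OF X] by (simp add: X_def e_def D_def scalar_prod_def)
  qed
  ultimately show ?thesis
    using nonsingular bordered by (simp add: B_def r_def)
qed

lemma eval_mat_rows_independent: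
  fixes E :: "'k \<Rightarrow> 'p \<Rightarrow> 'a::field"
  assumes len: "length ys = length ks" and nonsingular: "det (eval_mat E ks ys) \<noteq> 0"
    and zero: "\<And>i. i < length ys \<Longrightarrow> (\<Sum>j<length ks. b j * E (ks ! j) (ys ! i)) = 0"
    and j: "j < length ks"
  shows "b j = 0"
proof -
  define n where "n = length ks"
  have B: "transpose_mat (eval_mat E ks ys) \<in> carrier_mat n n"
    using eval_mat_carrier[OF len] by (simp add: n_def)
  have "transpose_mat (eval_mat E ks ys) *\<^sub>v vec n b = 0\<^sub>v n"
    using zero len
    by (intro eq_vecI) (auto simp: n_def eval_mat_def scalar_prod_def atLeast0LessThan mult.commute)
  then have "vec n b = 0\<^sub>v n"
    using nonsingular det_0_iff_vec_prod_zero_field[OF B] det_transpose eval_mat_carrier[OF len]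
    by (metis n_def vec_carrier)
  then show ?thesis
    using j unfolding n_def by (metis index_vec index_zero_vec(1))
qed

lemma nonsingular_minor_Nil: "nonsingular_minor E K X [] []"
proof -
  have "eval_mat E [] [] = 1\<^sub>m 0"
    by (rule eq_matI) (auto simp: eval_mat_def)
  then show ?thesis
    unfolding nonsingular_minor_def by simp
qed

lemma nonsingular_minor_distinct:
  assumes "nonsingular_minor E K X ks ys"
  shows "distinct ks"
proof (rule ccontr)
  assume "\<not> distinct ks"
  then obtain i j where ij: "i < length ks" "j < length ks" "i \<noteq> j" "ks ! i = ks ! j"
    by (auto simp: distinct_conv_nth)
  have A: "eval_mat E ks ys \<in> carrier_mat (length ks) (length ks)"
    using assms eval_mat_carrier unfolding nonsingular_minor_def by blast
  have "row (eval_mat E ks ys) i = row (eval_mat E ks ys) j"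
    using ij A by (intro eq_vecI) (auto simp: eval_mat_def)
  then have "det (eval_mat E ks ys) = 0"
    using det_identical_rows[OF A ij(3,1,2)] by blast
  with assms show False
    unfolding nonsingular_minor_def by blast
qed

lemma nonsingular_minor_length_le:
  assumes "finite K" "nonsingular_minor E K X ks ys"
  shows "length ks \<le> card K"
  using assms nonsingular_minor_distinct[OF assms(2)] distinct_card[of ks] card_mono[of K "set ks"]
  unfolding nonsingular_minor_def by fastforce

lemma
  assumes "finite K"
  shows minor_rank_ge: "nonsingular_minor E K X ks ys \<Longrightarrow> length ks \<le> minor_rank E K X"
    and minor_rank_attained: "\<exists>ks ys. nonsingular_minor E K X ks ys \<and> length ks = minor_rank E K X"
proof -
  let ?R = "{length ks | ks ys. nonsingular_minor E K X ks ys}"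
  have "finite ?R"
    by (rule finite_subset[of _ "{..card K}"]) (use nonsingular_minor_length_le[OF assms] in auto)
  moreover have "?R \<noteq> {}"
    using nonsingular_minor_Nil by blast
  ultimately show "nonsingular_minor E K X ks ys \<Longrightarrow> length ks \<le> minor_rank E K X"
    unfolding minor_rank_def by (blast intro: Max_ge)
  from Max_in[OF \<open>finite ?R\<close> \<open>?R \<noteq> {}\<close>]
  show "\<exists>ks ys. nonsingular_minor E K X ks ys \<and> length ks = minor_rank E K X"
    unfolding minor_rank_def by auto
qed

lemma maximal_minor_expansion:
  fixes E :: "'k \<Rightarrow> 'p \<Rightarrow> 'a::field"
  assumes K: "finite K" and minor: "nonsingular_minor E K X ks ys"
    and maximal: "minor_rank E K X \<le> length ks" and "k \<in> K" "y \<in> X"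
  shows "E k y * det (eval_mat E ks ys) = (\<Sum>j<length ks. expansion_coeff E ks ys k j * E (ks ! j) y)"
proof -
  have "\<not> nonsingular_minor E K X (ks @ [k]) (ys @ [y])"
    using minor_rank_ge[OF K, of E X "ks @ [k]"] maximal by auto
  then have "det (eval_mat E (ks @ [k]) (ys @ [y])) = 0"
    using minor \<open>k \<in> K\<close> \<open>y \<in> X\<close> unfolding nonsingular_minor_def by auto
  then show ?thesis
    using det_bordered_eval_mat[of ys ks E k y] minor unfolding nonsingular_minor_def by auto
qed

lemma maximal_minor_vanishing:
  fixes E :: "'k \<Rightarrow> 'p \<Rightarrow> 'a::field"
  assumes K: "finite K" and minor: "nonsingular_minor E K X ks ys"
    and maximal: "minor_rank E K X \<le> length ks"
    and f: "\<And>y. y \<in> X \<Longrightarrow> f y = (\<Sum>k\<in>K. a k * E k y)"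
    and zero: "\<And>y. y \<in> set ys \<Longrightarrow> f y = 0" and "y \<in> X"
  shows "f y = 0"
proof -
  define b where "b j = (\<Sum>k\<in>K. a k * expansion_coeff E ks ys k j)" for j
  have expand: "f z * det (eval_mat E ks ys) = (\<Sum>j<length ks. b j * E (ks ! j) z)" if "z \<in> X" for z
  proof -
    have "f z * det (eval_mat E ks ys) = (\<Sum>k\<in>K. a k * (E k z * det (eval_mat E ks ys)))"
      using that by (simp add: f sum_distrib_right mult.assoc)
    also have "\<dots> = (\<Sum>k\<in>K. a k * (\<Sum>j<length ks. expansion_coeff E ks ys k j * E (ks ! j) z))"
      using maximal_minor_expansion[OF K minor maximal _ that] by simp
    also have "\<dots> = (\<Sum>j<length ks. b j * E (ks ! j) z)"
      unfolding b_def sum_distrib_left sum_distrib_right by (subst sum.swap) (simp add: mult_ac)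
    finally show ?thesis .
  qed
  have "b j = 0" if "j < length ks" for j
  proof (rule eval_mat_rows_independent[of ys ks E])
    fix i assume "i < length ys"
    then have "ys ! i \<in> set ys"
      by simp
    then show "(\<Sum>j<length ks. b j * E (ks ! j) (ys ! i)) = 0"
      using expand[of "ys ! i"] zero minor unfolding nonsingular_minor_def by auto
  qed (use minor that in \<open>auto simp: nonsingular_minor_def\<close>)
  then have "f y * det (eval_mat E ks ys) = 0"
    using expand[OF \<open>y \<in> X\<close>] by simp
  then show ?thesis
    using minor unfolding nonsingular_minor_def by simp
qed

lemma minor_rank_le_if_spanned:
  fixes E :: "'k \<Rightarrow> 'p \<Rightarrow> 'a::field"
  assumes K: "finite K" and span: "\<And>k y. k \<in> K \<Longrightarrow> y \<in> X \<Longrightarrow> E k y = (\<Sum>j<r. c k j * F j y)"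
  shows "minor_rank E K X \<le> r"
proof (rule ccontr)
  assume "\<not> ?thesis"
  obtain ks ys where minor: "nonsingular_minor E K X ks ys" and len: "length ks = minor_rank E K X"
    using minor_rank_attained[OF K] by blast
  with \<open>\<not> ?thesis\<close> obtain l where l: "\<exists>i<length ks. l i \<noteq> 0"
    "\<forall>j<r. (\<Sum>i<length ks. l i * c (ks ! i) j) = 0"
    using linear_dependence[of "{..<r}" "{..<length ks}" "\<lambda>i j. c (ks ! i) j"] by auto
  have "(\<Sum>i<length ks. l i * E (ks ! i) (ys ! t)) = 0" if t: "t < length ys" for t
  proof -
    have "ks ! i \<in> K" "ys ! t \<in> X" if "i < length ks" for i
      using minor t that unfolding nonsingular_minor_def by auto
    then have "(\<Sum>i<length ks. l i * E (ks ! i) (ys ! t)) =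
        (\<Sum>i<length ks. l i * (\<Sum>j<r. c (ks ! i) j * F j (ys ! t)))"
      by (intro sum.cong) (auto simp: span)
    also have "\<dots> = (\<Sum>j<r. (\<Sum>i<length ks. l i * c (ks ! i) j) * F j (ys ! t))"
      unfolding sum_distrib_left sum_distrib_right by (subst sum.swap) (simp add: mult_ac)
    finally show ?thesis
      using l(2) by simp
  qed
  then have "l i = 0" if "i < length ks" for i
    using eval_mat_rows_independent[of ys ks E l i] minor that unfolding nonsingular_minor_def by blast
  with l(1) show False
    by blast
qed

section \<open>Countably many nonempty open subsets of an irreducible variety meet\<close>

lemma uncountable_infinite_fiber:
  fixes f :: "'a \<Rightarrow> 'b"
  assumes "uncountable (UNIV :: 'a set)" and "countable (range f)"
  obtains y where "infinite (f -` {y})"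
proof -
  have "UNIV = (\<Union>y\<in>range f. f -` {y})"
    by auto
  then have "\<not> (\<forall>y\<in>range f. countable (f -` {y}))"
    using assms by (metis countable_UN)
  then show ?thesis
    using that countable_finite by blast
qed

lemma lagrange_combination_nonzero:
  fixes l :: "'a::idom \<Rightarrow> 'a"
  assumes "finite T" "c0 \<in> T" "l c0 \<noteq> 0"
  shows "(\<Sum>c\<in>T. smult (l c) (\<Prod>t\<in>T - {c}. [:-t, 1:])) \<noteq> 0"
proof -
  have "poly (\<Sum>c\<in>T. smult (l c) (\<Prod>t\<in>T - {c}. [:-t, 1:])) c0 = (\<Sum>c\<in>T. l c * (\<Prod>t\<in>T - {c}. c0 - t))"
    by (simp add: poly_sum poly_prod)
  also have "\<dots> = l c0 * (\<Prod>t\<in>T - {c0}. c0 - t)"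
    using assms(1,2) by (subst sum.remove[of T c0]) (auto intro!: sum.neutral)
  also have "\<dots> \<noteq> 0"
    using assms by simp
  finally show ?thesis
    by auto
qed

definition poly_ideal :: "(('n::finite \<Rightarrow> complex) \<Rightarrow> complex) set \<Rightarrow> bool" where
  "poly_ideal J \<longleftrightarrow> J \<subseteq> poly_funs \<and> (\<lambda>x. 0) \<in> J \<and> (\<forall>a\<in>J. \<forall>b\<in>J. (\<lambda>x. a x + b x) \<in> J) \<and>
     (\<forall>a\<in>J. \<forall>p\<in>poly_funs. (\<lambda>x. p x * a x) \<in> J)"

lemma poly_idealD:
  assumes "poly_ideal J"
  shows "J \<subseteq> poly_funs" "(\<lambda>x. 0) \<in> J" "a \<in> J \<Longrightarrow> b \<in> J \<Longrightarrow> (\<lambda>x. a x + b x) \<in> J"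
    "a \<in> J \<Longrightarrow> p \<in> poly_funs \<Longrightarrow> (\<lambda>x. p x * a x) \<in> J"
  using assms unfolding poly_ideal_def by blast+

lemma poly_ideal_Union_chain:
  fixes C :: "(('n::finite \<Rightarrow> complex) \<Rightarrow> complex) set set"
  assumes "C \<noteq> {}" "\<And>J. J \<in> C \<Longrightarrow> poly_ideal J" and chain: "subset.chain C C"
  shows "poly_ideal (\<Union>C)"
  unfolding poly_ideal_def
proof (intro conjI ballI)
  show "\<Union>C \<subseteq> poly_funs" "(\<lambda>x. 0) \<in> \<Union>C"
    using assms(1,2) poly_idealD(1,2) by blast+
next
  fix a b :: "('n \<Rightarrow> complex) \<Rightarrow> complex"
  assume "a \<in> \<Union>C" "b \<in> \<Union>C"
  then obtain J K where JK: "J \<in> C" "K \<in> C" "a \<in> J" "b \<in> K"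
    by blast
  moreover have "J \<subseteq> K \<or> K \<subseteq> J"
    using chain JK(1,2) unfolding subset_chain_def by blast
  ultimately show "(\<lambda>x. a x + b x) \<in> \<Union>C"
    using assms(2) poly_idealD(3) by blast
next
  fix a p :: "('n \<Rightarrow> complex) \<Rightarrow> complex"
  assume "a \<in> \<Union>C" "p \<in> poly_funs"
  then show "(\<lambda>x. p x * a x) \<in> \<Union>C"
    using assms(2) poly_idealD(4) by blast
qed

lemma poly_ideal_maximal_avoiding:
  fixes S :: "(('n::finite \<Rightarrow> complex) \<Rightarrow> complex) set"
  assumes "poly_ideal I" "I \<inter> S = {}"
  obtains Q where "poly_ideal Q" "I \<subseteq> Q" "Q \<inter> S = {}"
    "\<And>J. poly_ideal J \<Longrightarrow> Q \<subseteq> J \<Longrightarrow> J \<inter> S = {} \<Longrightarrow> J = Q"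
proof -
  define A where "A = {J. poly_ideal J \<and> I \<subseteq> J \<and> J \<inter> S = {}}"
  have "\<exists>Q\<in>A. \<forall>J\<in>A. Q \<subseteq> J \<longrightarrow> J = Q"
  proof (rule subset_Zorn_nonempty)
    show "A \<noteq> {}"
      using assms unfolding A_def by blast
  next
    fix C assume C: "C \<noteq> {}" "subset.chain A C"
    then have "C \<subseteq> A" "subset.chain C C"
      unfolding subset_chain_def by blast+
    then have "poly_ideal (\<Union>C)"
      using poly_ideal_Union_chain[OF C(1)] unfolding A_def by blast
    then show "\<Union>C \<in> A"
      using C(1) \<open>C \<subseteq> A\<close> unfolding A_def by blast
  qed
  then obtain Q where "Q \<in> A" and max: "\<forall>J\<in>A. Q \<subseteq> J \<longrightarrow> J = Q"
    by blast
  show ?thesis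
  proof (rule that)
    show "poly_ideal Q" "I \<subseteq> Q" "Q \<inter> S = {}"
      using \<open>Q \<in> A\<close> unfolding A_def by auto
    show "J = Q" if "poly_ideal J" "Q \<subseteq> J" "J \<inter> S = {}" for J
      using max that \<open>I \<subseteq> Q\<close> unfolding A_def by simp
  qed
qed

lemma poly_ideal_extend:
  fixes Q :: "(('n::finite \<Rightarrow> complex) \<Rightarrow> complex) set"
  assumes Q: "poly_ideal Q" and a: "a \<in> poly_funs"
  shows "poly_ideal {f. \<exists>q\<in>Q. \<exists>b\<in>poly_funs. f = (\<lambda>x. q x + b x * a x)}"
    (is "poly_ideal ?J")
  unfolding poly_ideal_def
proof (intro conjI ballI)
  show "?J \<subseteq> poly_funs"
    using poly_idealD(1)[OF Q] a by (auto intro!: pf_add pf_mult)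
  show "(\<lambda>x. 0) \<in> ?J"
    by (intro CollectI bexI[of _ "\<lambda>x. 0"]) (auto intro: poly_idealD(2)[OF Q] pf_const)
next
  fix f g :: "('n \<Rightarrow> complex) \<Rightarrow> complex"
  assume "f \<in> ?J" "g \<in> ?J"
  then obtain q1 b1 q2 b2 where "q1 \<in> Q" "b1 \<in> poly_funs" "f = (\<lambda>x. q1 x + b1 x * a x)"
    "q2 \<in> Q" "b2 \<in> poly_funs" "g = (\<lambda>x. q2 x + b2 x * a x)"
    by blast
  then show "(\<lambda>x. f x + g x) \<in> ?J"
    by (intro CollectI bexI[of _ "\<lambda>x. q1 x + q2 x"] bexI[of _ "\<lambda>x. b1 x + b2 x"])
      (auto simp: algebra_simps intro: poly_idealD(3)[OF Q] pf_add)
next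
  fix f p :: "('n \<Rightarrow> complex) \<Rightarrow> complex"
  assume "f \<in> ?J" "p \<in> poly_funs"
  then obtain q b where "q \<in> Q" "b \<in> poly_funs" "f = (\<lambda>x. q x + b x * a x)"
    by blast
  with \<open>p \<in> poly_funs\<close> show "(\<lambda>x. p x * f x) \<in> ?J"
    by (intro CollectI bexI[of _ "\<lambda>x. p x * q x"] bexI[of _ "\<lambda>x. p x * b x"])
      (auto simp: algebra_simps intro: poly_idealD(4)[OF Q] pf_mult)
qed

text \<open>The maximal ideal avoiding a countable multiplicative set is the ideal of a point:
  its residue field has countable dimension over \<open>\<complex>\<close>, while the elements
  \<open>1 / (x\<^sub>i - c)\<close>, \<open>c \<in> \<complex>\<close>, would be uncountably many linearly independent ones.\<close>

locale maximal_avoiding_ideal =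
  fixes S Q :: "(('n::finite \<Rightarrow> complex) \<Rightarrow> complex) set"
  assumes ideal: "poly_ideal Q"
    and S_poly_funs: "S \<subseteq> poly_funs"
    and one_in_S: "(\<lambda>x. 1) \<in> S"
    and S_mult: "\<And>s t. s \<in> S \<Longrightarrow> t \<in> S \<Longrightarrow> (\<lambda>x. s x * t x) \<in> S"
    and disjoint: "Q \<inter> S = {}"
    and maximal: "\<And>J. poly_ideal J \<Longrightarrow> Q \<subseteq> J \<Longrightarrow> J \<inter> S = {} \<Longrightarrow> J = Q"
begin

lemma zero_in_Q: "(\<lambda>x. 0) \<in> Q"
  and Q_add: "a \<in> Q \<Longrightarrow> b \<in> Q \<Longrightarrow> (\<lambda>x. a x + b x) \<in> Q"
  and Q_mult: "a \<in> Q \<Longrightarrow> p \<in> poly_funs \<Longrightarrow> (\<lambda>x. p x * a x) \<in> Q"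
  using poly_idealD(2-4)[OF ideal] by blast+

lemma Q_diff: "a \<in> Q \<Longrightarrow> b \<in> Q \<Longrightarrow> (\<lambda>x. a x - b x) \<in> Q"
  using Q_add[of a "\<lambda>x. (-1) * b x"] Q_mult[of b "\<lambda>x. -1"] by (simp add: pf_const)

lemma Q_sum:
  "(\<And>c. c \<in> T \<Longrightarrow> p c \<in> poly_funs) \<Longrightarrow> (\<And>c. c \<in> T \<Longrightarrow> q c \<in> Q) \<Longrightarrow>
    (\<lambda>x. \<Sum>c\<in>T. p c x * q c x) \<in> Q"
proof (induction T rule: infinite_finite_induct)
  case (insert c T)
  then have "(\<lambda>x. p c x * q c x + (\<Sum>c\<in>T. p c x * q c x)) \<in> Q"
    using Q_add[OF Q_mult] by fastforce
  with insert show ?case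
    by simp
qed (simp_all add: zero_in_Q)

lemma S_meets_residue_class:
  assumes "a \<in> poly_funs" "a \<notin> Q"
  shows "\<exists>s\<in>S. \<exists>q\<in>Q. \<exists>b\<in>poly_funs. s = (\<lambda>x. q x + b x * a x)"
proof -
  define J where "J = {f. \<exists>q\<in>Q. \<exists>b\<in>poly_funs. f = (\<lambda>x. q x + b x * a x)}"
  have "poly_ideal J"
    unfolding J_def using poly_ideal_extend[OF ideal assms(1)] .
  moreover have "Q \<subseteq> J"
  proof
    fix q assume "q \<in> Q"
    then show "q \<in> J"
      unfolding J_def by (intro CollectI bexI[of _ q] bexI[of _ "\<lambda>x. 0"]) (auto intro: pf_const)
  qed
  moreover have "a \<in> J"
    unfolding J_def
    by (intro CollectI bexI[of _ "\<lambda>x. 0"] bexI[of _ "\<lambda>x. 1"]) (auto intro: pf_const zero_in_Q)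
  ultimately have "J \<inter> S \<noteq> {}"
    using maximal[of J] assms(2) by auto
  then show ?thesis
    unfolding J_def by blast
qed

lemma Q_prime:
  assumes "a \<in> poly_funs" "b \<in> poly_funs" "(\<lambda>x. a x * b x) \<in> Q"
  shows "a \<in> Q \<or> b \<in> Q"
proof (rule ccontr)
  assume "\<not> ?thesis"
  then have "a \<notin> Q" "b \<notin> Q"
    by auto
  obtain s1 q1 c1 where 1: "s1 \<in> S" "q1 \<in> Q" "c1 \<in> poly_funs" "s1 = (\<lambda>x. q1 x + c1 x * a x)"
    using S_meets_residue_class[OF assms(1) \<open>a \<notin> Q\<close>] by blast
  obtain s2 q2 c2 where 2: "s2 \<in> S" "q2 \<in> Q" "c2 \<in> poly_funs" "s2 = (\<lambda>x. q2 x + c2 x * b x)"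
    using S_meets_residue_class[OF assms(2) \<open>b \<notin> Q\<close>] by blast
  have "(\<lambda>x. s2 x * q1 x) \<in> Q"
    using Q_mult[OF 1(2)] 2(1) S_poly_funs by blast
  moreover have "(\<lambda>x. (c1 x * a x) * q2 x) \<in> Q"
    using Q_mult[OF 2(2) pf_mult[OF 1(3) assms(1)]] .
  moreover have "(\<lambda>x. (c1 x * c2 x) * (a x * b x)) \<in> Q"
    using Q_mult[OF assms(3) pf_mult[OF 1(3) 2(3)]] .
  ultimately have "(\<lambda>x. s2 x * q1 x + ((c1 x * a x) * q2 x + (c1 x * c2 x) * (a x * b x))) \<in> Q"
    using Q_add by blast
  also have "(\<lambda>x. s2 x * q1 x + ((c1 x * a x) * q2 x + (c1 x * c2 x) * (a x * b x))) =
      (\<lambda>x. s1 x * s2 x)"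
    unfolding 1(4) 2(4) by (auto simp: algebra_simps)
  finally show False
    using S_mult[OF 1(1) 2(1)] disjoint by blast
qed

lemma const_in_Q_iff: "(\<lambda>x. c) \<in> Q \<longleftrightarrow> c = 0"
proof
  assume "(\<lambda>x. c) \<in> Q"
  then have "(\<lambda>x. inverse c * c) \<in> Q"
    using Q_mult pf_const by fastforce
  then show "c = 0"
    using one_in_S disjoint by (cases "c = 0") auto
qed (simp add: zero_in_Q)

lemma linear_factor_in_Q:
  assumes "g \<noteq> 0" "(\<lambda>x. poly g (x i)) \<in> Q"
  shows "\<exists>r. (\<lambda>x. x i - r) \<in> Q"
  using assms
proof (induction "degree g" arbitrary: g rule: less_induct)
  case less
  show ?case
  proof (cases "degree g = 0")
    case True
    then obtain c where "g = [:c:]"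
      by (rule degree_eq_zeroE)
    then show ?thesis
      using less.prems const_in_Q_iff by auto
  next
    case False
    then have "\<not> constant (poly g)"
      by (simp add: constant_degree)
    then obtain r where "poly g r = 0"
      using fundamental_theorem_of_algebra by blast
    then obtain h where h: "g = [:-r, 1:] * h"
      by (metis dvdE poly_eq_0_iff_dvd)
    have "h \<noteq> 0"
      using less.prems(1) h by auto
    have "degree g = degree [:-r, 1:] + degree h"
      unfolding h by (rule degree_mult_eq) (use \<open>h \<noteq> 0\<close> in auto)
    then have "degree h < degree g"
      by simp
    have "(\<lambda>x. (x i - r) * poly h (x i)) \<in> Q"
      using less.prems h by (simp add: algebra_simps)
    then have "(\<lambda>x. x i - r) \<in> Q \<or> (\<lambda>x. poly h (x i)) \<in> Q"
      by (intro Q_prime) (auto intro: poly_funs_diff pf_var pf_const poly_funs_univariate)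
    then show ?thesis
      using less.hyps \<open>h \<noteq> 0\<close> \<open>degree h < degree g\<close> by blast
  qed
qed

lemma linear_factor_in_Q_if_dependent:
  assumes T: "finite T" and s: "s \<in> S"
    and qb: "\<And>c. c \<in> T \<Longrightarrow> q c \<in> Q \<and> s = (\<lambda>x. q c x + b c x * (x i - c))"
    and l: "c0 \<in> T" "l c0 \<noteq> 0" "\<And>x. (\<Sum>c\<in>T. l c * b c x) = 0"
  shows "\<exists>r. (\<lambda>x. x i - r) \<in> Q"
proof -
  define g where "g = (\<Sum>c\<in>T. smult (l c) (\<Prod>t\<in>T - {c}. [:-t, 1:]))"
  have "s x * poly g (x i) = (\<Sum>c\<in>T. (l c * (\<Prod>t\<in>T - {c}. x i - t)) * q c x)" for x
  proof -
    have "s x * poly g (x i) = (\<Sum>c\<in>T. l c * (\<Prod>t\<in>T - {c}. x i - t) * (q c x + b c x * (x i - c)))"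
      using qb unfolding g_def by (auto simp: poly_sum poly_prod sum_distrib_left mult_ac intro!: sum.cong)
    also have "\<dots> = (\<Sum>c\<in>T. l c * (\<Prod>t\<in>T - {c}. x i - t) * q c x + (\<Prod>t\<in>T. x i - t) * (l c * b c x))"
      using T by (intro sum.cong) (auto simp: prod.remove algebra_simps)
    also have "\<dots> = (\<Sum>c\<in>T. (l c * (\<Prod>t\<in>T - {c}. x i - t)) * q c x)"
      using l(3)[of x] by (simp add: sum.distrib flip: sum_distrib_left)
    finally show ?thesis .
  qed
  moreover have "(\<lambda>x. \<Sum>c\<in>T. (l c * (\<Prod>t\<in>T - {c}. x i - t)) * q c x) \<in> Q"
    using qb by (intro Q_sum poly_funs_const_mult poly_funs_prod poly_funs_diff pf_var pf_const) auto
  ultimately have "(\<lambda>x. s x * poly g (x i)) \<in> Q"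
    by simp
  then have "(\<lambda>x. poly g (x i)) \<in> Q"
    using Q_prime s S_poly_funs disjoint poly_funs_univariate by blast
  then show ?thesis
    using linear_factor_in_Q lagrange_combination_nonzero[of T c0 l] T l unfolding g_def by blast
qed

lemma coordinate_value_in_Q:
  assumes "countable S"
  shows "\<exists>r. (\<lambda>x. x i - r) \<in> Q"
proof (rule ccontr)
  assume none: "\<not> ?thesis"
  have "\<exists>s q b. s \<in> S \<and> q \<in> Q \<and> b \<in> poly_funs \<and> s = (\<lambda>x. q x + b x * (x i - c))" for c
  proof -
    have "(\<lambda>x. x i - c) \<notin> Q"
      using none by blast
    from S_meets_residue_class[OF poly_funs_diff[OF pf_var pf_const] this] show ?thesis
      by blast
  qed
  then have "\<forall>c. \<exists>s q b. s \<in> S \<and> q \<in> Q \<and> b \<in> poly_funs \<and> s = (\<lambda>x. q x + b x * (x i - c))"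
    by blast
  then obtain s q b where sqb: "\<forall>c. s c \<in> S \<and> q c \<in> Q \<and> b c \<in> poly_funs \<and>
      s c = (\<lambda>x. q c x + b c x * (x i - c))"
    by (auto simp only: choice_iff)
  have "\<forall>c. \<exists>d \<beta>. \<forall>x. b c x = (\<Sum>\<alpha>\<in>bounded_exponents d. \<beta> \<alpha> * monomial \<alpha> x)"
    using sqb poly_funs_monomial_expansion by blast
  then obtain d \<beta> where expand: "\<forall>c x. b c x = (\<Sum>\<alpha>\<in>bounded_exponents (d c). \<beta> c \<alpha> * monomial \<alpha> x)"
    by (auto simp only: choice_iff)
  have "range (\<lambda>c. (s c, d c)) \<subseteq> S \<times> UNIV"
    using sqb by blast
  then have "countable (range (\<lambda>c. (s c, d c)))"
    using assms countable_subset by blast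
  then obtain sd where "infinite ((\<lambda>c. (s c, d c)) -` {sd})"
    by (rule uncountable_infinite_fiber[OF uncountable_UNIV_complex])
  then obtain T where T: "finite T" "card T = Suc (card (bounded_exponents (snd sd) :: ('n \<Rightarrow> nat) set))"
      "T \<subseteq> (\<lambda>c. (s c, d c)) -` {sd}"
    by (meson infinite_arbitrarily_large)
  then have T_fiber: "\<And>c. c \<in> T \<Longrightarrow> s c = fst sd \<and> d c = snd sd"
    by auto
  obtain l where l: "\<exists>c\<in>T. l c \<noteq> 0" "\<forall>\<alpha>\<in>bounded_exponents (snd sd). (\<Sum>c\<in>T. l c * \<beta> c \<alpha>) = 0"
    using linear_dependence[of "bounded_exponents (snd sd)" T \<beta>] T(1,2) finite_bounded_exponents by auto
  have "(\<Sum>c\<in>T. l c * b c x) = 0" for x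
  proof -
    have "(\<Sum>c\<in>T. l c * b c x) = (\<Sum>c\<in>T. \<Sum>\<alpha>\<in>bounded_exponents (snd sd). l c * \<beta> c \<alpha> * monomial \<alpha> x)"
      using T_fiber expand by (intro sum.cong) (auto simp: sum_distrib_left mult.assoc)
    also have "\<dots> = (\<Sum>\<alpha>\<in>bounded_exponents (snd sd). (\<Sum>c\<in>T. l c * \<beta> c \<alpha>) * monomial \<alpha> x)"
      by (subst sum.swap) (simp add: sum_distrib_right)
    finally show ?thesis
      using l(2) by simp
  qed
  moreover obtain c0 where "c0 \<in> T" "l c0 \<noteq> 0"
    using l(1) by blast
  moreover have "q c \<in> Q \<and> fst sd = (\<lambda>x. q c x + b c x * (x i - c))" if "c \<in> T" for c
    using sqb T_fiber[OF that] by simp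
  moreover have "fst sd \<in> S"
    using sqb T_fiber \<open>c0 \<in> T\<close> by metis
  ultimately show False
    using linear_factor_in_Q_if_dependent[of T "fst sd" q b i c0 l] none T(1) by blast
qed

lemma ideal_of_point:
  assumes "countable S"
  obtains r where "\<And>p. p \<in> poly_funs \<Longrightarrow> p \<in> Q \<longleftrightarrow> p r = 0"
proof -
  obtain r where r: "\<And>i. (\<lambda>x. x i - r i) \<in> Q"
    using coordinate_value_in_Q[OF assms] by metis
  have minus_value: "(\<lambda>x. p x - p r) \<in> Q" if "p \<in> poly_funs" for p
    using that
  proof (induction rule: poly_funs.induct)
    case (pf_add f g)
    then have "(\<lambda>x. (f x - f r) + (g x - g r)) \<in> Q"
      using Q_add[OF pf_add.IH] by simp
    then show ?case
      by (simp add: algebra_simps)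
  next
    case (pf_mult f g)
    then have "(\<lambda>x. g x * (f x - f r) + f r * (g x - g r)) \<in> Q"
      using Q_add[OF Q_mult[OF pf_mult.IH(1)] Q_mult[OF pf_mult.IH(2) pf_const]] by simp
    then show ?case
      by (simp add: algebra_simps)
  qed (use r zero_in_Q in auto)
  have "p \<in> Q \<longleftrightarrow> p r = 0" if p: "p \<in> poly_funs" for p
  proof
    assume "p \<in> Q"
    then have "(\<lambda>x. p x - (p x - p r)) \<in> Q"
      using Q_diff minus_value[OF p] by blast
    then show "p r = 0"
      using const_in_Q_iff by simp
  next
    assume "p r = 0"
    then show "p \<in> Q"
      using minus_value[OF p] by simp
  qed
  then show ?thesis
    by (rule that)
qed

end

lemma irreducible_avoids_countable_multiplicative:
  fixes S :: "(('n::finite \<Rightarrow> complex) \<Rightarrow> complex) set"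
  assumes M: "irreducible_affine_variety M"
    and S: "countable S" "S \<subseteq> poly_funs" "(\<lambda>x. 1) \<in> S" "\<And>s t. s \<in> S \<Longrightarrow> t \<in> S \<Longrightarrow> (\<lambda>x. s x * t x) \<in> S"
    and nonzero: "\<And>s. s \<in> S \<Longrightarrow> \<exists>x\<in>M. s x \<noteq> 0"
  shows "\<exists>r\<in>M. \<forall>s\<in>S. s r \<noteq> 0"
proof -
  define I where "I = {f \<in> poly_funs. \<forall>x\<in>M. f x = 0}"
  have "poly_ideal I"
    unfolding poly_ideal_def I_def by (auto intro: pf_add pf_mult pf_const)
  moreover have "I \<inter> S = {}"
    using nonzero unfolding I_def by blast
  ultimately obtain Q where Q: "poly_ideal Q" "I \<subseteq> Q" "Q \<inter> S = {}"
    "\<And>J. poly_ideal J \<Longrightarrow> Q \<subseteq> J \<Longrightarrow> J \<inter> S = {} \<Longrightarrow> J = Q"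
    by (rule poly_ideal_maximal_avoiding) blast
  interpret maximal_avoiding_ideal S Q
    using Q S by unfold_locales auto
  obtain r where r: "\<And>f. f \<in> poly_funs \<Longrightarrow> f \<in> Q \<longleftrightarrow> f r = 0"
    using ideal_of_point[OF S(1)] by blast
  obtain F where F: "F \<subseteq> poly_funs" "M = {x. \<forall>f\<in>F. f x = 0}"
    using M unfolding irreducible_affine_variety_def zariski_closed_def by blast
  have "f \<in> Q" if "f \<in> F" for f
    using F that Q(2) unfolding I_def by blast
  then have "r \<in> M"
    using F r by blast
  moreover have "s r \<noteq> 0" if "s \<in> S" for s
    using that r S(2) disjoint by blast
  ultimately show ?thesis
    by blast
qed

lemma irreducible_countable_common_nonzero:
  fixes h :: "'i::countable \<Rightarrow> ('n::finite \<Rightarrow> complex) \<Rightarrow> complex"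
  assumes M: "irreducible_affine_variety M"
    and regular: "\<And>d. regular_on M (h d)" and nonzero: "\<And>d. \<exists>x\<in>M. h d x \<noteq> 0"
  shows "\<exists>x\<in>M. \<forall>d. h d x \<noteq> 0"
proof -
  obtain p where p: "\<And>d. p d \<in> poly_funs" "\<And>d x. x \<in> M \<Longrightarrow> h d x = p d x"
    using regular unfolding regular_on_def by metis
  define prods where "prods ds x = prod_list (map (\<lambda>d. p d x) ds)" for ds x
  have prods_poly_funs: "prods ds \<in> poly_funs" for ds
    by (induction ds) (simp_all add: prods_def[abs_def] pf_const pf_mult[OF p(1)])
  have prods_nonzero: "\<exists>x\<in>M. prods ds x \<noteq> 0" for ds
  proof (induction ds)
    case Nil
    then show ?case
      using M unfolding irreducible_affine_variety_def prods_def by auto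
  next
    case (Cons d ds)
    have "\<not> (\<forall>x\<in>M. p d x = 0)" "\<not> (\<forall>x\<in>M. prods ds x = 0)"
      using nonzero[of d] p(2) Cons.IH by auto
    then obtain x where "x \<in> M" "p d x * prods ds x \<noteq> 0"
      using irreducible_vanishing_product[OF M regular_on_poly_funs[OF p(1)[of d]]
          regular_on_poly_funs[OF prods_poly_funs[of ds]]]
      by blast
    then show ?case
      by (intro bexI[of _ x]) (simp_all add: prods_def)
  qed
  have prods_mult: "(\<lambda>x. s x * t x) \<in> range prods" if st: "s \<in> range prods" "t \<in> range prods" for s t
  proof -
    obtain ds es where "s = prods ds" "t = prods es"
      using st by blast
    then show ?thesis
      by (intro image_eqI[of _ _ "ds @ es"]) (auto simp: prods_def)
  qed
  have "(\<lambda>x. 1) \<in> range prods"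
    by (intro image_eqI[of _ _ "[]"]) (auto simp: prods_def)
  moreover have "countable (range prods)" "range prods \<subseteq> poly_funs"
    using prods_poly_funs by (blast intro: countable_image countableI_type)+
  ultimately obtain r where "r \<in> M" "\<forall>s\<in>range prods. s r \<noteq> 0"
    using irreducible_avoids_countable_multiplicative[OF M, of "range prods"] prods_mult prods_nonzero
    by blast
  moreover have "p d = prods [d]" for d
    by (simp add: prods_def fun_eq_iff)
  ultimately show ?thesis
    using p(2) by (metis rangeI)
qed

section \<open>Orbits of an algebraic action\<close>

locale irreducible_action = group G for G :: "('g, 'z) monoid_scheme" +
  fixes M :: "('n::finite \<Rightarrow> complex) set" and \<phi> :: "'g \<Rightarrow> ('n \<Rightarrow> complex) \<Rightarrow> ('n \<Rightarrow> complex)"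
  assumes irreducible: "irreducible_affine_variety M"
    and action: "algebraic_action G M \<phi>"
begin

lemma M_nonempty: "M \<noteq> {}"
  using irreducible unfolding irreducible_affine_variety_def by blast

lemma act_regular_map: "g \<in> carrier G \<Longrightarrow> regular_map M M (\<phi> g)"
  using action unfolding algebraic_action_def algebraic_automorphism_def by blast

lemma act_closed: "g \<in> carrier G \<Longrightarrow> x \<in> M \<Longrightarrow> \<phi> g x \<in> M"
  using act_regular_map unfolding regular_map_def by blast

lemma act_one: "x \<in> M \<Longrightarrow> \<phi> \<one>\<^bsub>G\<^esub> x = x"
  and act_mult: "g \<in> carrier G \<Longrightarrow> h \<in> carrier G \<Longrightarrow> x \<in> M \<Longrightarrow> \<phi> (g \<otimes>\<^bsub>G\<^esub> h) x = \<phi> g (\<phi> h x)"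
  using action unfolding algebraic_action_def by blast+

lemma orbit_subset: "x \<in> M \<Longrightarrow> orbit_of G \<phi> x \<subseteq> M"
  unfolding orbit_of_def using act_closed by blast

lemma self_in_orbit: "x \<in> M \<Longrightarrow> x \<in> orbit_of G \<phi> x"
  unfolding orbit_of_def by (rule image_eqI[of _ _ "\<one>\<^bsub>G\<^esub>"]) (simp_all add: act_one)

lemma orbit_of_act:
  assumes g: "g \<in> carrier G" and x: "x \<in> M"
  shows "orbit_of G \<phi> (\<phi> g x) = orbit_of G \<phi> x"
proof
  show "orbit_of G \<phi> (\<phi> g x) \<subseteq> orbit_of G \<phi> x"
  proof
    fix y assume "y \<in> orbit_of G \<phi> (\<phi> g x)"
    then obtain h where h: "h \<in> carrier G" "y = \<phi> h (\<phi> g x)"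
      unfolding orbit_of_def by blast
    then have "y = \<phi> (h \<otimes>\<^bsub>G\<^esub> g) x"
      using act_mult g x by simp
    then show "y \<in> orbit_of G \<phi> x"
      unfolding orbit_of_def using h g by blast
  qed
  have "\<phi> h x = \<phi> (h \<otimes>\<^bsub>G\<^esub> inv\<^bsub>G\<^esub> g) (\<phi> g x)" if h: "h \<in> carrier G" for h
  proof -
    have "(h \<otimes>\<^bsub>G\<^esub> inv\<^bsub>G\<^esub> g) \<otimes>\<^bsub>G\<^esub> g = h"
      using h g by (simp add: m_assoc)
    then show ?thesis
      using act_mult[of "h \<otimes>\<^bsub>G\<^esub> inv\<^bsub>G\<^esub> g" g x] h g x by simp
  qed
  then show "orbit_of G \<phi> x \<subseteq> orbit_of G \<phi> (\<phi> g x)"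
    unfolding orbit_of_def using g by blast
qed

lemma list_in_orbit:
  "set ys \<subseteq> orbit_of G \<phi> x \<Longrightarrow> \<exists>gs. set gs \<subseteq> carrier G \<and> ys = map (\<lambda>g. \<phi> g x) gs"
proof (induction ys)
  case (Cons y ys)
  then obtain gs where gs: "set gs \<subseteq> carrier G" "ys = map (\<lambda>g. \<phi> g x) gs"
    by auto
  obtain g where "g \<in> carrier G" "y = \<phi> g x"
    using Cons.prems unfolding orbit_of_def by auto
  with gs show ?case
    by (intro exI[of _ "g # gs"]) auto
qed simp

lemma regular_on_orbit_eval_mat:
  assumes gs: "set gs \<subseteq> carrier G" and E: "\<And>k. E k \<in> poly_funs"
    and "i < length ks" "j < length gs"
  shows "regular_on M (\<lambda>x. eval_mat E ks (map (\<lambda>g. \<phi> g x) gs) $$ (i, j))"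
proof -
  have "regular_on M (\<lambda>x. E (ks ! i) (\<phi> (gs ! j) x))"
    using gs assms(4) by (intro regular_on_comp[OF regular_on_poly_funs[OF E] act_regular_map]) auto
  then show ?thesis
    using assms(3,4) by (simp add: eval_mat_def)
qed

lemma regular_on_orbit_minor_det:
  assumes "set gs \<subseteq> carrier G" "\<And>k. E k \<in> poly_funs" "length gs = length ks"
  shows "regular_on M (\<lambda>x. det (eval_mat E ks (map (\<lambda>g. \<phi> g x) gs)))"
  using assms eval_mat_carrier[of "map _ gs" ks E]
  by (intro regular_on_det[where n = "length ks"] regular_on_orbit_eval_mat) auto

lemma regular_on_orbit_expansion_coeff:
  assumes gs: "set gs \<subseteq> carrier G" and E: "\<And>k. E k \<in> poly_funs"
    and len: "length gs = length ks" and j: "j < length ks"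
  shows "regular_on M (\<lambda>x. expansion_coeff E ks (map (\<lambda>g. \<phi> g x) gs) k j)"
  unfolding expansion_coeff_def length_map
proof (intro regular_on_sum regular_on_mult)
  fix i assume "i \<in> {..<length gs}"
  then have i: "i < length gs"
    by simp
  then show "regular_on M (\<lambda>x. E k (map (\<lambda>g. \<phi> g x) gs ! i))"
    using gs by (simp, intro regular_on_comp[OF regular_on_poly_funs[OF E] act_regular_map]) auto
  show "regular_on M (\<lambda>x. adj_mat (eval_mat E ks (map (\<lambda>g. \<phi> g x) gs)) $$ (i, j))"
    using assms i eval_mat_carrier[of "map _ gs" ks E]
    by (intro regular_on_adj_mat[where n = "length ks"] regular_on_orbit_eval_mat) auto
qed

lemma nonsingular_orbit_minor:
  assumes "x \<in> M" "set gs \<subseteq> carrier G" "set ks \<subseteq> K" "length gs = length ks"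
    and "det (eval_mat E ks (map (\<lambda>g. \<phi> g x) gs)) \<noteq> 0"
  shows "nonsingular_minor E K (orbit_of G \<phi> x) ks (map (\<lambda>g. \<phi> g x) gs)"
  using assms unfolding nonsingular_minor_def orbit_of_def by auto

end

locale maximal_orbit_minor = irreducible_action G M \<phi>
  for G :: "('g, 'z) monoid_scheme" and M :: "('n::finite \<Rightarrow> complex) set" and \<phi> +
  fixes E :: "'k \<Rightarrow> ('n \<Rightarrow> complex) \<Rightarrow> complex" and K :: "'k set"
    and ks :: "'k list" and gs :: "'g list" and x0 :: "'n \<Rightarrow> complex"
  assumes E_poly_funs: "\<And>k. E k \<in> poly_funs"
    and finite_K: "finite K"
    and gs_carrier: "set gs \<subseteq> carrier G"
    and x0: "x0 \<in> M"
    and minor_x0: "nonsingular_minor E K (orbit_of G \<phi> x0) ks (map (\<lambda>g. \<phi> g x0) gs)"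
    and maximal: "\<And>x. x \<in> M \<Longrightarrow> minor_rank E K (orbit_of G \<phi> x) \<le> length ks"
begin

definition minor_det :: "('n \<Rightarrow> complex) \<Rightarrow> complex" where
  "minor_det x = det (eval_mat E ks (map (\<lambda>g. \<phi> g x) gs))"

definition minor_coeff :: "'k \<Rightarrow> nat \<Rightarrow> ('n \<Rightarrow> complex) \<Rightarrow> complex" where
  "minor_coeff k j x = expansion_coeff E ks (map (\<lambda>g. \<phi> g x) gs) k j"

lemma length_gs: "length gs = length ks"
  using minor_x0 unfolding nonsingular_minor_def by simp

lemma ks_subset: "set ks \<subseteq> K"
  using minor_x0 unfolding nonsingular_minor_def by simp

lemma regular_on_minor_det: "regular_on M minor_det"
  unfolding minor_det_def[abs_def]
  using regular_on_orbit_minor_det[OF gs_carrier E_poly_funs length_gs] .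

lemma regular_on_minor_coeff: "j < length ks \<Longrightarrow> regular_on M (minor_coeff k j)"
  unfolding minor_coeff_def[abs_def]
  using regular_on_orbit_expansion_coeff[OF gs_carrier E_poly_funs length_gs] .

lemma minor_det_x0: "minor_det x0 \<noteq> 0"
  using minor_x0 unfolding nonsingular_minor_def minor_det_def by simp

lemma orbit_expansion:
  assumes "x \<in> M" "minor_det x \<noteq> 0" "k \<in> K" "y \<in> orbit_of G \<phi> x"
  shows "E k y * minor_det x = (\<Sum>j<length ks. minor_coeff k j x * E (ks ! j) y)"
proof -
  have "det (eval_mat E ks (map (\<lambda>g. \<phi> g x) gs)) \<noteq> 0"
    using assms(2) unfolding minor_det_def .
  then have "nonsingular_minor E K (orbit_of G \<phi> x) ks (map (\<lambda>g. \<phi> g x) gs)"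
    using assms(1) by (intro nonsingular_orbit_minor gs_carrier ks_subset length_gs)
  then show ?thesis
    unfolding minor_det_def minor_coeff_def
    using maximal_minor_expansion[OF finite_K _ maximal[OF assms(1)]] assms(3,4) by simp
qed

text \<open>Both sides are, up to the factor \<open>minor_det z * minor_det z'\<close>, the unique coefficient
  of \<open>E (ks ! j)\<close> in the expansion of \<open>E k\<close> on the common orbit of \<open>z\<close> and \<open>z'\<close>.\<close>

lemma minor_coeff_same_orbit:
  assumes k: "k \<in> K" and j: "j < length ks" and z: "z \<in> M" "minor_det z \<noteq> 0"
    and z': "z' \<in> M" "minor_det z' \<noteq> 0" and orbit: "orbit_of G \<phi> z' = orbit_of G \<phi> z"
  shows "minor_coeff k j z' * minor_det z = minor_coeff k j z * minor_det z'"
proof -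
  define b where "b j' = minor_coeff k j' z' * minor_det z - minor_coeff k j' z * minor_det z'" for j'
  have b_annihilates: "(\<Sum>j'<length ks. b j' * E (ks ! j') y) = 0" if y: "y \<in> orbit_of G \<phi> z" for y
  proof -
    have "(\<Sum>j'<length ks. b j' * E (ks ! j') y) = (\<Sum>j'<length ks.
        minor_coeff k j' z' * E (ks ! j') y * minor_det z - minor_coeff k j' z * E (ks ! j') y * minor_det z')"
      unfolding b_def by (intro sum.cong) (simp_all add: algebra_simps)
    also have "\<dots> = (\<Sum>j'<length ks. minor_coeff k j' z' * E (ks ! j') y) * minor_det z -
        (\<Sum>j'<length ks. minor_coeff k j' z * E (ks ! j') y) * minor_det z'"
      by (simp add: sum_subtractf sum_distrib_right)
    also have "\<dots> = (E k y * minor_det z') * minor_det z - (E k y * minor_det z) * minor_det z'"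
      using orbit_expansion[OF z' k] orbit_expansion[OF z k] y orbit by simp
    finally show ?thesis
      by simp
  qed
  have "b j = 0"
  proof (rule eval_mat_rows_independent[of "map (\<lambda>g. \<phi> g z') gs" ks E b j])
    show "det (eval_mat E ks (map (\<lambda>g. \<phi> g z') gs)) \<noteq> 0"
      using z'(2) by (simp add: minor_det_def)
    fix i assume "i < length (map (\<lambda>g. \<phi> g z') gs)"
    then have "map (\<lambda>g. \<phi> g z') gs ! i \<in> orbit_of G \<phi> z'"
      using gs_carrier unfolding orbit_of_def by (auto intro!: imageI)
    then show "(\<Sum>j'<length ks. b j' * E (ks ! j') (map (\<lambda>g. \<phi> g z') gs ! i)) = 0"
      using b_annihilates orbit by simp
  qed (use j length_gs in auto)
  then show ?thesis
    by (simp add: b_def)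
qed

lemma minor_coeff_invariant:
  assumes k: "k \<in> K" and j: "j < length ks" and \<gamma>: "\<gamma> \<in> carrier G" and x: "x \<in> M"
  shows "minor_coeff k j (\<phi> \<gamma> x) * minor_det x = minor_coeff k j x * minor_det (\<phi> \<gamma> x)"
proof -
  let ?H = "\<lambda>x. minor_coeff k j (\<phi> \<gamma> x) * minor_det x - minor_coeff k j x * minor_det (\<phi> \<gamma> x)"
  let ?D = "\<lambda>x. minor_det x * minor_det (\<phi> \<gamma> x)"
  have "?H z = 0" if "z \<in> M" "?D z \<noteq> 0" for z
    using minor_coeff_same_orbit[OF k j, of z "\<phi> \<gamma> z"] that act_closed[OF \<gamma>] orbit_of_act[OF \<gamma>]
    by simp
  moreover have "regular_on M ?H" "regular_on M ?D"
    using regular_on_minor_coeff[OF j] regular_on_minor_det \<gamma>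
    by (auto intro!: regular_on_diff regular_on_mult regular_on_comp[OF _ act_regular_map])
  moreover have "\<exists>z\<in>M. ?D z \<noteq> 0"
  proof -
    have "\<phi> \<gamma> (\<phi> (inv\<^bsub>G\<^esub> \<gamma>) x0) = x0"
      using act_mult[of \<gamma> "inv\<^bsub>G\<^esub> \<gamma>" x0] act_one \<gamma> x0 by simp
    then have "\<exists>z\<in>M. minor_det (\<phi> \<gamma> z) \<noteq> 0"
      using act_closed \<gamma> x0 minor_det_x0 by (metis inv_closed)
    then show ?thesis
      using irreducible_vanishing_product[OF irreducible regular_on_minor_det
          regular_on_comp[OF regular_on_minor_det act_regular_map[OF \<gamma>]]] minor_det_x0 x0
      by blast
  qed
  ultimately show ?thesis
    using irreducible_vanishing_off_zeros[OF irreducible, of ?D ?H] x by auto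
qed

lemma minor_coeff_nonconstant:
  assumes "length ks < minor_rank E K M"
  shows "\<exists>k\<in>K. \<exists>j<length ks. \<not> (\<exists>c. \<forall>x\<in>M. minor_coeff k j x = c * minor_det x)"
proof (rule ccontr)
  assume "\<not> ?thesis"
  then obtain c where c: "\<And>k j x. k \<in> K \<Longrightarrow> j < length ks \<Longrightarrow> x \<in> M \<Longrightarrow> minor_coeff k j x = c k j * minor_det x"
    by metis
  have "E k y = (\<Sum>j<length ks. c k j * E (ks ! j) y)" if k: "k \<in> K" and y: "y \<in> M" for k y
  proof -
    let ?L = "\<lambda>y. E k y - (\<Sum>j<length ks. c k j * E (ks ! j) y)"
    have "?L z = 0" if z: "z \<in> M" "minor_det z \<noteq> 0" for z
    proof -
      have "E k z * minor_det z = (\<Sum>j<length ks. minor_coeff k j z * E (ks ! j) z)"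
        using orbit_expansion[OF z k self_in_orbit[OF z(1)]] .
      also have "\<dots> = (\<Sum>j<length ks. c k j * E (ks ! j) z) * minor_det z"
        unfolding sum_distrib_right by (intro sum.cong) (simp_all add: c[OF k _ z(1)])
      finally show ?thesis
        using z(2) by simp
    qed
    moreover have "regular_on M ?L"
      using E_poly_funs by (intro regular_on_diff regular_on_sum regular_on_mult regular_on_const regular_on_poly_funs)
    ultimately show ?thesis
      using irreducible_vanishing_off_zeros[OF irreducible regular_on_minor_det, of ?L] minor_det_x0 x0 y
      by auto
  qed
  then have "minor_rank E K M \<le> length ks"
    by (rule minor_rank_le_if_spanned[OF finite_K])
  with assms show False
    by simp
qed

lemma invariant_rational_function:
  assumes "length ks < minor_rank E K M"
  shows "\<exists>f g. rational_fun_rep M f g \<and> (\<forall>\<gamma>\<in>carrier G. rat_eq M (f \<circ> \<phi> \<gamma>) (g \<circ> \<phi> \<gamma>) f g) \<and>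
    \<not> (\<exists>c. rat_eq M f g (\<lambda>x. c) (\<lambda>x. 1))"
proof -
  obtain k j where k: "k \<in> K" and j: "j < length ks"
    and nonconstant: "\<not> (\<exists>c. \<forall>x\<in>M. minor_coeff k j x = c * minor_det x)"
    using minor_coeff_nonconstant[OF assms] by blast
  obtain f g where f: "f \<in> poly_funs" "\<And>x. x \<in> M \<Longrightarrow> minor_coeff k j x = f x"
    and g: "g \<in> poly_funs" "\<And>x. x \<in> M \<Longrightarrow> minor_det x = g x"
    using regular_on_minor_coeff[OF j] regular_on_minor_det unfolding regular_on_def by metis
  have "rational_fun_rep M f g"
    unfolding rational_fun_rep_def using f g minor_det_x0 x0 by auto
  moreover have "rat_eq M (f \<circ> \<phi> \<gamma>) (g \<circ> \<phi> \<gamma>) f g" if "\<gamma> \<in> carrier G" for \<gamma>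
    unfolding rat_eq_def using minor_coeff_invariant[OF k j that] f g act_closed[OF that] by simp
  moreover have "\<not> (\<exists>c. rat_eq M f g (\<lambda>x. c) (\<lambda>x. 1))"
    unfolding rat_eq_def using nonconstant f g by simp
  ultimately show ?thesis
    by blast
qed

end

context irreducible_action
begin

lemma invariant_rational_function_if_orbits_deficient:
  fixes E :: "'k \<Rightarrow> ('n \<Rightarrow> complex) \<Rightarrow> complex"
  assumes E: "\<And>k. E k \<in> poly_funs" and K: "finite K"
    and deficient: "\<And>x. x \<in> M \<Longrightarrow> minor_rank E K (orbit_of G \<phi> x) < minor_rank E K M"
  shows "\<exists>f g. rational_fun_rep M f g \<and> (\<forall>\<gamma>\<in>carrier G. rat_eq M (f \<circ> \<phi> \<gamma>) (g \<circ> \<phi> \<gamma>) f g) \<and>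
    \<not> (\<exists>c. rat_eq M f g (\<lambda>x. c) (\<lambda>x. 1))"
proof -
  define R where "R = (\<lambda>x. minor_rank E K (orbit_of G \<phi> x)) ` M"
  have "R \<subseteq> {..minor_rank E K M}"
    unfolding R_def using deficient by (auto intro: less_imp_le)
  then have "finite R"
    by (rule finite_subset) simp
  moreover have "R \<noteq> {}"
    unfolding R_def using M_nonempty by simp
  ultimately have "Max R \<in> R"
    by (rule Max_in)
  then obtain x0 where x0: "x0 \<in> M" "Max R = minor_rank E K (orbit_of G \<phi> x0)"
    unfolding R_def by (rule imageE)
  obtain ks ys where minor: "nonsingular_minor E K (orbit_of G \<phi> x0) ks ys"
    and len: "length ks = minor_rank E K (orbit_of G \<phi> x0)"
    using minor_rank_attained[OF K] by blast
  obtain gs where gs: "set gs \<subseteq> carrier G" "ys = map (\<lambda>g. \<phi> g x0) gs"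
    using list_in_orbit minor unfolding nonsingular_minor_def by blast
  have "minor_rank E K (orbit_of G \<phi> x) \<le> length ks" if "x \<in> M" for x
  proof -
    have "minor_rank E K (orbit_of G \<phi> x) \<in> R"
      unfolding R_def using that by blast
    then show ?thesis
      using Max_ge[OF \<open>finite R\<close>] x0(2) len by simp
  qed
  then interpret maximal_orbit_minor G M \<phi> E K ks gs x0
    using E K gs x0 minor
    by (intro maximal_orbit_minor.intro irreducible_action_axioms maximal_orbit_minor_axioms.intro
        irreducible_action.intro is_group) simp_all
  show ?thesis
    using invariant_rational_function deficient[OF x0(1)] len by simp
qed

lemma dense_orbit_if_maximal_minors:
  assumes z: "z \<in> M"
    and minors: "\<And>d. \<exists>ks gs. set gs \<subseteq> carrier G \<and>
      nonsingular_minor monomial (bounded_exponents d) M ks (map (\<lambda>g. \<phi> g z) gs) \<and>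
      minor_rank monomial (bounded_exponents d) M \<le> length ks"
  shows "zariski_dense_in (orbit_of G \<phi> z) M"
proof -
  have "M \<subseteq> A" if A: "zariski_closed A" "orbit_of G \<phi> z \<subseteq> A" for A
  proof
    fix y assume "y \<in> M"
    obtain F where F: "F \<subseteq> poly_funs" "A = {x. \<forall>f\<in>F. f x = 0}"
      using A(1) unfolding zariski_closed_def by blast
    have "f y = 0" if "f \<in> F" for f
    proof -
      have "f \<in> poly_funs"
        using F(1) \<open>f \<in> F\<close> by blast
      then obtain d c where "\<forall>x. f x = (\<Sum>\<alpha>\<in>bounded_exponents d. c \<alpha> * monomial \<alpha> x)"
        using poly_funs_monomial_expansion by blast
      moreover obtain ks gs where "set gs \<subseteq> carrier G"
        and minor: "nonsingular_minor monomial (bounded_exponents d) M ks (map (\<lambda>g. \<phi> g z) gs)"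
        and maximal: "minor_rank monomial (bounded_exponents d) M \<le> length ks"
        using minors by blast
      moreover have "f w = 0" if "w \<in> set (map (\<lambda>g. \<phi> g z) gs)" for w
        using that \<open>set gs \<subseteq> carrier G\<close> A(2) F \<open>f \<in> F\<close> unfolding orbit_of_def by auto
      ultimately show ?thesis
        using maximal_minor_vanishing[OF finite_bounded_exponents minor maximal] \<open>y \<in> M\<close> by blast
    qed
    then show "y \<in> A"
      using F by blast
  qed
  then show ?thesis
    using z orbit_subset[OF z] unfolding zariski_dense_in_def by blast
qed

lemma dense_orbit_if_orbits_full:
  assumes full: "\<And>d. \<exists>x\<in>M. minor_rank monomial (bounded_exponents d) M \<le>
    minor_rank monomial (bounded_exponents d) (orbit_of G \<phi> x)"
  shows "\<exists>x\<in>M. zariski_dense_in (orbit_of G \<phi> x) M"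
proof -
  have "\<exists>x gs ks. x \<in> M \<and> set gs \<subseteq> carrier G \<and>
      nonsingular_minor monomial (bounded_exponents d) (orbit_of G \<phi> x) ks (map (\<lambda>g. \<phi> g x) gs) \<and>
      minor_rank monomial (bounded_exponents d) M \<le> length ks" for d
  proof -
    obtain x where x: "x \<in> M" "minor_rank monomial (bounded_exponents d) M \<le>
        minor_rank monomial (bounded_exponents d) (orbit_of G \<phi> x)"
      using full by blast
    obtain ks ys where minor: "nonsingular_minor monomial (bounded_exponents d) (orbit_of G \<phi> x) ks ys"
      and len: "length ks = minor_rank monomial (bounded_exponents d) (orbit_of G \<phi> x)"
      using minor_rank_attained[OF finite_bounded_exponents] by blast
    moreover obtain gs where "set gs \<subseteq> carrier G" "ys = map (\<lambda>g. \<phi> g x) gs"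
      using list_in_orbit minor unfolding nonsingular_minor_def by blast
    ultimately show ?thesis
      using x by (intro exI[of _ x] exI[of _ gs] exI[of _ ks]) simp
  qed
  then have "\<forall>d. \<exists>x gs ks. x \<in> M \<and> set gs \<subseteq> carrier G \<and>
      nonsingular_minor monomial (bounded_exponents d) (orbit_of G \<phi> x) ks (map (\<lambda>g. \<phi> g x) gs) \<and>
      minor_rank monomial (bounded_exponents d) M \<le> length ks"
    by blast
  then obtain x gs ks where minors: "\<forall>d. x d \<in> M \<and> set (gs d) \<subseteq> carrier G \<and>
      nonsingular_minor monomial (bounded_exponents d) (orbit_of G \<phi> (x d)) (ks d) (map (\<lambda>g. \<phi> g (x d)) (gs d)) \<and>
      minor_rank monomial (bounded_exponents d) M \<le> length (ks d)"
    by (auto simp only: choice_iff)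
  define h where "h d z = det (eval_mat monomial (ks d) (map (\<lambda>g. \<phi> g z) (gs d)))" for d z
  have "regular_on M (h d)" for d
    unfolding h_def[abs_def] using minors poly_funs_monomial
    by (intro regular_on_orbit_minor_det) (auto simp: nonsingular_minor_def)
  moreover have "\<exists>z\<in>M. h d z \<noteq> 0" for d
    using minors unfolding h_def nonsingular_minor_def by blast
  ultimately obtain z where z: "z \<in> M" "\<And>d. h d z \<noteq> 0"
    using irreducible_countable_common_nonzero[OF irreducible] by blast
  have "nonsingular_minor monomial (bounded_exponents d) M (ks d) (map (\<lambda>g. \<phi> g z) (gs d))" for d
  proof -
    have "set (map (\<lambda>g. \<phi> g z) (gs d)) \<subseteq> M"
      using minors act_closed z(1) by auto
    then show ?thesis
      using minors z(2)[of d] unfolding h_def nonsingular_minor_def by auto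
  qed
  then have "\<exists>ks gs. set gs \<subseteq> carrier G \<and>
      nonsingular_minor monomial (bounded_exponents d) M ks (map (\<lambda>g. \<phi> g z) gs) \<and>
      minor_rank monomial (bounded_exponents d) M \<le> length ks" for d
    using minors by blast
  then show ?thesis
    using dense_orbit_if_maximal_minors[OF z(1)] z(1) by blast
qed

end

theorem theorem2p2:
  fixes G :: "('g, 'z) monoid_scheme"
    and M :: "('n::finite \<Rightarrow> complex) set"
    and \<phi> :: "'g \<Rightarrow> ('n \<Rightarrow> complex) \<Rightarrow> ('n \<Rightarrow> complex)"
  assumes "finitely_presented G"
    and "irreducible_affine_variety M"
    and "algebraic_action G M \<phi>"
  shows "(\<exists>f g. rational_fun_rep M f g \<and>
            (\<forall>\<gamma>\<in>carrier G. rat_eq M (f \<circ> \<phi> \<gamma>) (g \<circ> \<phi> \<gamma>) f g) \<and>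
            \<not> (\<exists>c. rat_eq M f g (\<lambda>x. c) (\<lambda>x. 1)))
       \<or> (\<exists>x\<in>M. zariski_dense_in (orbit_of G \<phi> x) M)"
proof -
  have "group G"
    using assms(1) unfolding finitely_presented_def by blast
  then interpret irreducible_action G M \<phi>
    using assms(2,3) by (intro irreducible_action.intro irreducible_action_axioms.intro)
  show ?thesis
  proof (cases "\<exists>d. \<forall>x\<in>M. minor_rank monomial (bounded_exponents d) (orbit_of G \<phi> x) <
      minor_rank monomial (bounded_exponents d) M")
    case True
    then obtain d where "\<And>x. x \<in> M \<Longrightarrow> minor_rank monomial (bounded_exponents d) (orbit_of G \<phi> x) <
        minor_rank monomial (bounded_exponents d) M"
      by blast
    then show ?thesis
      using invariant_rational_function_if_orbits_deficient[where E = monomial,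
          OF poly_funs_monomial finite_bounded_exponents]
      by blast
  next
    case False
    then have "\<And>d. \<exists>x\<in>M. minor_rank monomial (bounded_exponents d) M \<le>
        minor_rank monomial (bounded_exponents d) (orbit_of G \<phi> x)"
      by (auto simp: not_less)
    then show ?thesis
      using dense_orbit_if_orbits_full by blast
  qed
qed

end
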